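(* Let $K$ be a field, $S=K[x_1,\ldots,x_n]$, and $I\subset S$ a strongly stable monomial ideal. Fix integers $1\le d\le N$ such that $d\le\deg(u)\le N$ for all $u\in G(I)$. Then for all $i$, $$\beta_i(I_{\langle N+1\rangle})-\beta_i(I)=\sum_{j=d}^{N}\sum_{k=i+1}^{n} m_{\le k-1}(I_{\langle j\rangle})\binom{k-1}{i}.$$
   Context: $\beta_i(N)=\dim_K\operatorname{Tor}_i^S(K,N)$. $G(I)$ is the minimal set of monomial generators of a monomial ideal $I$. For a monomial $u$, $m(u)=\max\{i:x_i\mid u\}$; $m_i(I)$ is the number of $u\in G(I)$ with $m(u)=i$, and $m_{\le i}(I)=\sum_{j=1}^i m_j(I)$. $I_{\langle j\rangle}$ is the ideal generated by the degree-$j$ elements of $I$. A monomial ideal $I$ is strongly stable if for every monomial $u\in I$ and every variable $x_j$ dividing $u$, one has $x_i(u/x_j)\in I$ for all $i<j$. *)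

theory Defs
  imports Complex_Main "HOL-Library.Function_Algebras"
begin

text \<open>Monomials of S = K[x_1,...,x_n] are represented by exponent vectors
  a :: nat => nat supported on {1..n}; u divides v iff u \<le> v (pointwise).
  A monomial ideal is represented by the set of monomials it contains.\<close>

type_synonym monomial = "nat \<Rightarrow> nat"

definition monomials :: "nat \<Rightarrow> monomial set" where
  "monomials n = {a. \<forall>i. a i \<noteq> 0 \<longrightarrow> i \<in> {1..n}}"

definition monomial_ideal :: "nat \<Rightarrow> monomial set \<Rightarrow> bool" where
  "monomial_ideal n I \<longleftrightarrow> I \<subseteq> monomials n \<and> (\<forall>u\<in>I. \<forall>v\<in>monomials n. u \<le> v \<longrightarrow> v \<in> I)"

definition gens :: "monomial set \<Rightarrow> monomial set" where
  "gens I = {u\<in>I. \<forall>v\<in>I. v \<le> u \<longrightarrow> v = u}"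

definition mdeg :: "nat \<Rightarrow> monomial \<Rightarrow> nat" where
  "mdeg n u = (\<Sum>i=1..n. u i)"

definition mmax :: "monomial \<Rightarrow> nat" where
  "mmax u = Max {i. u i \<noteq> 0}"

definition m_count :: "monomial set \<Rightarrow> nat \<Rightarrow> nat" where
  "m_count I i = card {u \<in> gens I. mmax u = i}"

definition m_le :: "monomial set \<Rightarrow> nat \<Rightarrow> nat" where
  "m_le I i = (\<Sum>j=1..i. m_count I j)"

text \<open>I_<j>: the ideal generated by the degree-j monomials of I.\<close>
definition deg_part :: "nat \<Rightarrow> monomial set \<Rightarrow> nat \<Rightarrow> monomial set" where
  "deg_part n I j = {v \<in> monomials n. \<exists>u\<in>I. mdeg n u = j \<and> u \<le> v}"

definition strongly_stable :: "nat \<Rightarrow> monomial set \<Rightarrow> bool" where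
  "strongly_stable n I \<longleftrightarrow> monomial_ideal n I \<and>
     (\<forall>u\<in>I. \<forall>j. 0 < u j \<longrightarrow> (\<forall>i. 1 \<le> i \<and> i < j \<longrightarrow> (u(j := u j - 1))(i := u i + 1) \<in> I))"

text \<open>Tor_i^S(K, I) is computed by the Koszul complex K(x_1,...,x_n) \<otimes> I, which is
  Z^n-graded. In multidegree a, its i-th chain space has K-basis the i-subsets F of
  {1..n} with x^(a - e_F) \<in> I, i.e. the elements e_F \<otimes> x^(a-e_F). Chains are
  finitely supported functions from subsets to K.\<close>

definition kbasis :: "nat \<Rightarrow> monomial set \<Rightarrow> monomial \<Rightarrow> nat \<Rightarrow> nat set set" where
  "kbasis n I a i = {F. F \<subseteq> {1..n} \<and> card F = i \<and> (\<forall>k\<in>F. 0 < a k) \<and>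
       (\<lambda>k. a k - (if k \<in> F then 1 else 0)) \<in> I}"

definition kchains :: "'k::field itself \<Rightarrow> nat \<Rightarrow> monomial set \<Rightarrow> monomial \<Rightarrow> nat \<Rightarrow> (nat set \<Rightarrow> 'k) set" where
  "kchains K n I a i = {c. \<forall>F. c F \<noteq> 0 \<longrightarrow> F \<in> kbasis n I a i}"

text \<open>Koszul differential: d(e_F \<otimes> m) = sum_{j in F} (-1)^{#{k in F, k<j}} e_{F-{j}} \<otimes> x_j m.\<close>
definition kdiff :: "nat \<Rightarrow> (nat set \<Rightarrow> 'k::field) \<Rightarrow> nat set \<Rightarrow> 'k" where
  "kdiff n c G = (\<Sum>j\<in>{1..n} - G. (-1) ^ card {k \<in> G. k < j} * c (insert j G))"

definition fscale :: "'k::field \<Rightarrow> (nat set \<Rightarrow> 'k) \<Rightarrow> nat set \<Rightarrow> 'k" where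
  "fscale r c = (\<lambda>F. r * c F)"

definition betti_mg :: "'k::field itself \<Rightarrow> nat \<Rightarrow> monomial set \<Rightarrow> nat \<Rightarrow> monomial \<Rightarrow> nat" where
  "betti_mg K n I i a =
     vector_space.dim (fscale :: 'k \<Rightarrow> _) {c \<in> kchains K n I a i. kdiff n c = (\<lambda>_. 0)}
     - vector_space.dim (fscale :: 'k \<Rightarrow> _) (kdiff n ` kchains K n I a (Suc i))"

text \<open>beta_i(I) = dim_K Tor_i^S(K, I) = sum over all multidegrees (only finitely many are nonzero).\<close>
definition betti :: "'k::field itself \<Rightarrow> nat \<Rightarrow> monomial set \<Rightarrow> nat \<Rightarrow> nat" where
  "betti K n I i = (\<Sum>a \<in> {a \<in> monomials n. betti_mg K n I i a \<noteq> 0}. betti_mg K n I i a)"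

end

theory Submission
  imports Defs "HOL-Library.Indicator_Function"
begin

(* For a strongly stable ideal J whose minimal generators have positive degree, the
   Eliahou-Kervaire formula gives beta_i(J) = sum of binom(m(u) - 1, i) over u in G(J).
   It is proved in each multidegree a, where beta_{i,a}(J) is the homology of the upper Koszul
   simplicial complex {F : x^(a - F) in J}. Adding the minimal generators one at a time, in
   increasing order of degree and then of the weight sum_q q u_q, each step either adds a cone of
   faces, which elementary collapses remove without changing homology, or a single face whose
   boundary already bounds. Such a face creates exactly one new homology class, matching the one
   Eliahou-Kervaire symbol (u, B) with B a subset of {1, ..., m(u) - 1} in multidegree a.

   The theorem compares the formula for I and for I_<N+1>. The minimal generators of I_<N+1> are
   the monomials of degree N + 1 in I, and each monomial of degree j + 1 in I that is not a minimal
   generator is uniquely w x_l with w in I of degree j and l >= m(w). Summing binom(m - 1, i) over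
   these sets telescopes from degree d up to N + 1, and the sums over l > m(w) regroup into the
   counts m_<=(k-1)(I_<j>) of the right-hand side. *)

section \<open>Dimensions of subspaces of finitely generated spans\<close>

context vector_space
begin

lemma finite_basis_of_subspace:
  assumes "subspace U" "U \<subseteq> span W" "finite W"
  obtains B where "B \<subseteq> U" "independent B" "span B = U" "finite B" "card B = dim U"
proof -
  obtain B where B: "B \<subseteq> U" "independent B" "U \<subseteq> span B" "card B = dim U"
    using basis_exists[of U] by blast
  have "span B = U" using B assms(1) by (intro span_subspace) auto
  moreover have "finite B"
    using independent_span_bound[OF assms(3) B(2)] B(1) assms(2) by blast
  ultimately show ?thesis using that B by blast
qed

lemma dim_le_of_subspace:
  assumes "U \<subseteq> V" "subspace V" "V \<subseteq> span W" "finite W"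
  shows "dim U \<le> dim V"
proof -
  obtain B where "independent B" "span B = V" "finite B" "card B = dim V"
    using finite_basis_of_subspace[OF assms(2-4)] by blast
  then show ?thesis using dim_le_card[of U B] assms(1) by auto
qed

lemma dim_extend_by_vector:
  assumes U: "subspace U" and V: "subspace V" and "U \<subseteq> V" "x \<in> V" "x \<notin> U"
    and V_sub: "\<forall>v\<in>V. \<exists>k. v - k *s x \<in> U"
    and "U \<subseteq> span W" "finite W"
  shows "dim V = Suc (dim U)"
proof -
  obtain B where B: "B \<subseteq> U" "independent B" "span B = U" "finite B" "card B = dim U"
    using finite_basis_of_subspace[OF U assms(7,8)] by blast
  have "independent (insert x B)"
    using B assms(5) by (intro independent_insertI) auto
  moreover have "span (insert x B) = V"
  proof
    show "span (insert x B) \<subseteq> V"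
      using B assms(3,4) V by (intro span_minimal) auto
    show "V \<subseteq> span (insert x B)"
      using V_sub B(3) unfolding span_insert by blast
  qed
  ultimately have "dim V = card (insert x B)"
    using V by (metis dim_eq_card span_eq_iff)
  then show ?thesis using B assms(5) by (metis card_insert_disjoint subsetD)
qed

lemma subspace_le_of_dim_le:
  assumes U: "subspace U" and V: "subspace V" and "U \<subseteq> V"
    and W: "V \<subseteq> span W" "finite W" and le: "dim V \<le> dim U"
  shows "V \<subseteq> U"
proof (rule ccontr)
  assume "\<not> V \<subseteq> U"
  then obtain x where x: "x \<in> V" "x \<notin> U" by blast
  let ?V = "span (insert x U)"
  have "dim ?V = Suc (dim U)"
  proof (rule dim_extend_by_vector[OF U _ _ _ x(2) _ _ W(2)])
    show "\<forall>v\<in>?V. \<exists>k. v - k *s x \<in> U"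
      using U unfolding span_insert span_eq_iff[symmetric] by blast
    show "U \<subseteq> span W" using assms(3) W span_superset by blast
  qed (auto intro: span_base span_superset[THEN subsetD])
  moreover have "dim ?V \<le> dim V"
    using x assms(3) V W by (intro dim_le_of_subspace[OF _ V W]) (simp add: span_minimal)
  ultimately show False using le by simp
qed

end

section \<open>Koszul homology of simplicial complexes\<close>

interpretation fs: vector_space "fscale :: 'a::field \<Rightarrow> (nat set \<Rightarrow> 'a) \<Rightarrow> nat set \<Rightarrow> 'a"
  by unfold_locales (auto simp: fscale_def fun_eq_iff algebra_simps)

lemma fscale_apply [simp]: "fscale r c F = r * c F"
  by (simp add: fscale_def)

lemma sum_fun_apply: "(sum f A) x = sum (\<lambda>a. f a x) A"
  by (induction A rule: infinite_finite_induct) auto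

definition unit_chain :: "nat set \<Rightarrow> nat set \<Rightarrow> 'a::field" where
  "unit_chain F = (\<lambda>G. if G = F then 1 else 0)"

definition chain_space :: "'a::field itself \<Rightarrow> nat set set \<Rightarrow> nat \<Rightarrow> (nat set \<Rightarrow> 'a) set" where
  "chain_space K X j = {c. \<forall>F. c F \<noteq> 0 \<longrightarrow> F \<in> X \<and> card F = j}"

definition cycle_space :: "'a::field itself \<Rightarrow> nat \<Rightarrow> nat set set \<Rightarrow> nat \<Rightarrow> (nat set \<Rightarrow> 'a) set" where
  "cycle_space K n X j = {c \<in> chain_space K X j. kdiff n c = 0}"

definition boundary_space :: "'a::field itself \<Rightarrow> nat \<Rightarrow> nat set set \<Rightarrow> nat \<Rightarrow> (nat set \<Rightarrow> 'a) set" where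
  "boundary_space K n X j = kdiff n ` chain_space K X (Suc j)"

definition homology_dim :: "'a::field itself \<Rightarrow> nat \<Rightarrow> nat set set \<Rightarrow> nat \<Rightarrow> nat" where
  "homology_dim K n X j = fs.dim (cycle_space K n X j) - fs.dim (boundary_space K n X j)"

definition simplicial_complex :: "nat \<Rightarrow> nat set set \<Rightarrow> bool" where
  "simplicial_complex n X \<longleftrightarrow> (\<forall>F\<in>X. F \<subseteq> {1..n}) \<and> (\<forall>F\<in>X. \<forall>x\<in>F. F - {x} \<in> X)"

definition koszul_sign :: "nat \<Rightarrow> nat set \<Rightarrow> 'a::field" where
  "koszul_sign k G = (-1) ^ card {x \<in> G. x < k}"

lemma unit_chain_apply: "unit_chain F G = (if G = F then 1 else 0)"
  by (simp add: unit_chain_def)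

lemma kdiff_add: "kdiff n (c + d) = kdiff n c + kdiff n d"
  by (auto simp: kdiff_def fun_eq_iff sum.distrib algebra_simps)

lemma kdiff_diff: "kdiff n (c - d) = kdiff n c - kdiff n d"
  by (auto simp: kdiff_def fun_eq_iff sum_subtractf algebra_simps)

lemma kdiff_uminus: "kdiff n (- c) = - kdiff n c"
  by (auto simp: kdiff_def fun_eq_iff sum_negf)

lemma kdiff_fscale: "kdiff n (fscale r c) = fscale r (kdiff n c)"
  by (auto simp: kdiff_def fun_eq_iff sum_distrib_left algebra_simps)

lemma kdiff_zero [simp]: "kdiff n 0 = 0"
  by (auto simp: kdiff_def fun_eq_iff)

lemma kdiff_koszul_sign: "kdiff n c G = (\<Sum>j\<in>{1..n} - G. koszul_sign j G * c (insert j G))"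
  by (simp add: kdiff_def koszul_sign_def)

lemma koszul_sign_insert:
  assumes "j \<notin> G" "k \<noteq> j"
  shows "koszul_sign k (insert j G) = (if j < k then - koszul_sign k G else (koszul_sign k G :: 'a::field))"
proof -
  have "{x \<in> insert j G. x < k} = (if j < k then insert j {x \<in> G. x < k} else {x \<in> G. x < k})"
    by auto
  then show ?thesis using assms by (auto simp: koszul_sign_def)
qed

lemma koszul_sign_square: "koszul_sign b F * koszul_sign b F = (1 :: 'a::field)"
  unfolding koszul_sign_def by (simp add: power_mult_distrib[symmetric])

lemma koszul_sign_nonzero: "koszul_sign b F \<noteq> (0 :: 'a::field)"
  unfolding koszul_sign_def by simp

lemma kdiff_kdiff: "kdiff n (kdiff n c) = 0"
proof
  fix G
  define R where "R = {1..n} - G"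
  define P where "P j k = koszul_sign j G * koszul_sign k G * c (insert k (insert j G))" for j k
  have P_sym: "P j k = P k j" for j k
    unfolding P_def by (simp add: insert_commute mult.commute)
  have inner: "koszul_sign j G * kdiff n c (insert j G)
      = (\<Sum>k\<in>R. (if j < k then - P j k else 0) + (if k < j then P j k else 0))" if "j \<in> R" for j
  proof -
    have R_j: "{1..n} - insert j G = R - {j}" unfolding R_def by auto
    have fin: "finite R" unfolding R_def by simp
    have "koszul_sign j G * kdiff n c (insert j G)
        = (\<Sum>k\<in>R - {j}. koszul_sign j G * (koszul_sign k (insert j G) * c (insert k (insert j G))))"
      unfolding kdiff_koszul_sign R_j sum_distrib_left ..
    also have "\<dots> = (\<Sum>k\<in>R - {j}. (if j < k then - P j k else 0) + (if k < j then P j k else 0))"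
      using that unfolding R_def by (intro sum.cong refl) (auto simp: koszul_sign_insert P_def)
    also have "\<dots> = (\<Sum>k\<in>R. (if j < k then - P j k else 0) + (if k < j then P j k else 0))"
      using sum.remove[OF fin that, of "\<lambda>k. (if j < k then - P j k else 0) + (if k < j then P j k else 0)"]
      by simp
    finally show ?thesis .
  qed
  have "kdiff n (kdiff n c) G = (\<Sum>j\<in>R. koszul_sign j G * kdiff n c (insert j G))"
    unfolding kdiff_koszul_sign R_def ..
  also have "\<dots> = (\<Sum>j\<in>R. \<Sum>k\<in>R. if j < k then - P j k else 0)
      + (\<Sum>j\<in>R. \<Sum>k\<in>R. if k < j then P j k else 0)"
    using inner by (simp add: sum.distrib)
  also have "(\<Sum>j\<in>R. \<Sum>k\<in>R. if k < j then P j k else 0) = (\<Sum>j\<in>R. \<Sum>k\<in>R. if j < k then P j k else 0)"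
    by (subst sum.swap) (intro sum.cong refl, metis P_sym)
  finally show "kdiff n (kdiff n c) G = 0 G"
    by (simp add: sum.distrib[symmetric] if_distrib cong: if_cong)
qed

lemma kdiff_unit_chain_insert:
  assumes "b \<notin> F" "b \<in> {1..n}"
  shows "kdiff n (unit_chain (insert b F)) F = (koszul_sign b F :: 'a::field)"
proof -
  have "kdiff n (unit_chain (insert b F) :: nat set \<Rightarrow> 'a) F
      = (\<Sum>j\<in>{1..n} - F. if j = b then koszul_sign j F else 0)"
    unfolding kdiff_koszul_sign
  proof (intro sum.cong refl)
    fix j assume "j \<in> {1..n} - F"
    then have "(insert j F = insert b F) = (j = b)" using assms(1) by blast
    then show "koszul_sign j F * unit_chain (insert b F) (insert j F) = (if j = b then koszul_sign j F else 0)"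
      by (simp add: unit_chain_apply)
  qed
  also have "\<dots> = koszul_sign b F" using assms by simp
  finally show ?thesis .
qed

lemma chain_space_subspace: "fs.subspace (chain_space K X j)"
  unfolding fs.subspace_def chain_space_def by auto (metis add.right_neutral)+

lemma cycle_space_subspace: "fs.subspace (cycle_space K n X j)"
  using chain_space_subspace[of K X j]
  unfolding fs.subspace_def cycle_space_def by (auto simp: kdiff_add kdiff_fscale)

lemma boundary_space_subspace: "fs.subspace (boundary_space K n X j)"
proof -
  have "module_hom fscale fscale (kdiff n)"
    by unfold_locales (simp_all add: kdiff_add kdiff_fscale)
  then show ?thesis
    unfolding boundary_space_def by (rule module_hom.subspace_image[OF _ chain_space_subspace])
qed

lemma chain_space_mono: "X \<subseteq> Y \<Longrightarrow> chain_space K X j \<subseteq> chain_space K Y j"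
  unfolding chain_space_def by auto

lemma chain_space_insert_other_card: "card A \<noteq> j \<Longrightarrow> chain_space K (insert A X) j = chain_space K X j"
  unfolding chain_space_def by auto

lemma chain_space_vanish: "c \<in> chain_space K X j \<Longrightarrow> F \<notin> X \<Longrightarrow> c F = 0"
  unfolding chain_space_def by auto

lemma unit_chain_in_chain_space: "F \<in> X \<Longrightarrow> card F = j \<Longrightarrow> unit_chain F \<in> chain_space K X j"
  unfolding chain_space_def unit_chain_def by auto

lemma chain_space_insert_diff_unit_chain:
  "c \<in> chain_space K (insert A X) j \<Longrightarrow> c - fscale (c A) (unit_chain A) \<in> chain_space K X j"
  unfolding chain_space_def by (auto simp: unit_chain_apply)

lemma chain_space_subset_span:
  assumes "finite X"
  shows "chain_space K X j \<subseteq> fs.span (unit_chain ` X)"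
proof
  fix c :: "nat set \<Rightarrow> 'a" assume c: "c \<in> chain_space K X j"
  have "c = (\<Sum>F\<in>X. fscale (c F) (unit_chain F))"
  proof
    fix G
    show "c G = (\<Sum>F\<in>X. fscale (c F) (unit_chain F)) G"
      using c assms unfolding sum_fun_apply
      by (auto simp: unit_chain_apply chain_space_def if_distrib cong: if_cong)
  qed
  also have "\<dots> \<in> fs.span (unit_chain ` X)"
    by (intro fs.span_sum fs.span_scale fs.span_base) auto
  finally show "c \<in> fs.span (unit_chain ` X)" .
qed

lemma simplicial_complex_finite: "simplicial_complex n X \<Longrightarrow> finite X"
  unfolding simplicial_complex_def by (meson Pow_iff finite_Pow_iff finite_atLeastAtMost finite_subset subsetI)

lemma simplicial_complex_finite_face: "simplicial_complex n X \<Longrightarrow> F \<in> X \<Longrightarrow> finite F"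
  unfolding simplicial_complex_def by (meson finite_atLeastAtMost finite_subset)

lemma simplicial_complex_chain_space_subset_span:
  "simplicial_complex n X \<Longrightarrow> chain_space K X j \<subseteq> fs.span (unit_chain ` X)"
  using chain_space_subset_span simplicial_complex_finite by blast

lemma kdiff_chain_space:
  assumes X: "simplicial_complex n X" and c: "c \<in> chain_space K X (Suc j)"
  shows "kdiff n c \<in> chain_space K X j"
  unfolding chain_space_def mem_Collect_eq
proof (intro allI impI)
  fix G assume "kdiff n c G \<noteq> 0"
  then obtain k where k: "k \<in> {1..n} - G" "c (insert k G) \<noteq> 0"
    unfolding kdiff_def by (metis (no_types, lifting) mult_zero_right sum.neutral)
  then have kG: "insert k G \<in> X" "card (insert k G) = Suc j"
    using c unfolding chain_space_def by auto
  then have "insert k G - {k} \<in> X" using X unfolding simplicial_complex_def by blast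
  moreover have "finite G" using simplicial_complex_finite_face[OF X kG(1)] by simp
  ultimately show "G \<in> X \<and> card G = j" using kG k by auto
qed

lemma cycle_space_subset_chain_space: "cycle_space K n X j \<subseteq> chain_space K X j"
  unfolding cycle_space_def by auto

lemma boundary_space_subset_chain_space: "simplicial_complex n X \<Longrightarrow> boundary_space K n X j \<subseteq> chain_space K X j"
  unfolding boundary_space_def using kdiff_chain_space by blast

lemma boundary_space_subset_cycle_space: "simplicial_complex n X \<Longrightarrow> boundary_space K n X j \<subseteq> cycle_space K n X j"
  using boundary_space_subset_chain_space[of n X K j] unfolding cycle_space_def boundary_space_def by (auto simp: kdiff_kdiff)

lemma dim_boundary_space_le_dim_cycle_space:
  assumes "simplicial_complex n X"
  shows "fs.dim (boundary_space K n X j) \<le> fs.dim (cycle_space K n X j)"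
  using assms
  by (intro fs.dim_le_of_subspace[OF boundary_space_subset_cycle_space cycle_space_subspace _ finite_imageI])
     (auto simp: cycle_space_def dest: simplicial_complex_chain_space_subset_span simplicial_complex_finite)

lemma cycle_space_subset_boundary_space_if_homology_zero:
  assumes X: "simplicial_complex n X" and "homology_dim K n X j = 0"
  shows "cycle_space K n X j \<subseteq> boundary_space K n X j"
proof (rule fs.subspace_le_of_dim_le[OF boundary_space_subspace cycle_space_subspace boundary_space_subset_cycle_space[OF X]])
  show "cycle_space K n X j \<subseteq> fs.span (unit_chain ` X)"
    using simplicial_complex_chain_space_subset_span[OF X] unfolding cycle_space_def by blast
  show "finite (unit_chain ` X)" using simplicial_complex_finite[OF X] by simp
  show "fs.dim (cycle_space K n X j) \<le> fs.dim (boundary_space K n X j)"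
    using assms(2) unfolding homology_dim_def by simp
qed

lemma homology_dim_empty: "homology_dim (K :: 'a::field itself) n {} j = 0"
proof -
  have "chain_space K {} j = {0}" for j unfolding chain_space_def by (auto simp: fun_eq_iff)
  then have "cycle_space K n {} j = fs.span {}" "boundary_space K n {} j = fs.span {}"
    unfolding cycle_space_def boundary_space_def by auto
  then show ?thesis unfolding homology_dim_def by simp
qed

lemma chain_space_insert_replace_unit_chain:
  assumes "c \<in> chain_space K (insert A X) j" "l \<in> chain_space K X j"
  shows "c - fscale (c A) (unit_chain A) + fscale (c A) l \<in> chain_space K X j"
  using chain_space_insert_diff_unit_chain[OF assms(1)] assms(2)
  by (intro fs.subspace_add[OF chain_space_subspace] fs.subspace_scale[OF chain_space_subspace])

text \<open>The new homology class is that of the cycle \<open>unit_chain A - l\<close>.\<close>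

lemma homology_dim_insert_face:
  fixes K :: "'a::field itself" and l :: "nat set \<Rightarrow> 'a"
  assumes X: "simplicial_complex n X" and X': "simplicial_complex n (insert A X)" and A: "A \<notin> X"
    and l: "l \<in> chain_space K X (card A)" "kdiff n l = kdiff n (unit_chain A)"
  shows "homology_dim K n (insert A X) (card A) = Suc (homology_dim K n X (card A))"
proof -
  let ?X' = "insert A X" and ?q = "card A"
  define v where "v = unit_chain A - l"
  have XX': "chain_space K X j \<subseteq> chain_space K ?X' j" for j by (rule chain_space_mono) auto
  have v: "v \<in> cycle_space K n ?X' ?q"
    unfolding v_def cycle_space_def using l XX' unit_chain_in_chain_space[of A ?X' ?q K]
    by (auto simp: kdiff_diff intro: fs.subspace_diff[OF chain_space_subspace])
  have "l A = 0" using l(1) A chain_space_vanish by blast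
  then have vA: "v A = 1" unfolding v_def by (simp add: unit_chain_apply)
  have "fs.dim (cycle_space K n ?X' ?q) = Suc (fs.dim (cycle_space K n X ?q))"
  proof (rule fs.dim_extend_by_vector[OF cycle_space_subspace cycle_space_subspace])
    show "cycle_space K n X ?q \<subseteq> cycle_space K n ?X' ?q" using XX' unfolding cycle_space_def by auto
    show "v \<notin> cycle_space K n X ?q" using vA A chain_space_vanish[of v K X ?q A] unfolding cycle_space_def by auto
    show "\<forall>z\<in>cycle_space K n ?X' ?q. \<exists>k. z - fscale k v \<in> cycle_space K n X ?q"
    proof
      fix z assume z: "z \<in> cycle_space K n ?X' ?q"
      have "z - fscale (z A) v = z - fscale (z A) (unit_chain A) + fscale (z A) l"
        unfolding v_def by (simp add: fun_eq_iff algebra_simps)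
      also have "\<dots> \<in> chain_space K X ?q"
        using z l(1) unfolding cycle_space_def by (intro chain_space_insert_replace_unit_chain) auto
      finally show "\<exists>k. z - fscale k v \<in> cycle_space K n X ?q"
        using z v unfolding cycle_space_def by (auto simp: kdiff_diff kdiff_fscale)
    qed
    show "cycle_space K n X ?q \<subseteq> fs.span (unit_chain ` ?X')"
      using XX' simplicial_complex_chain_space_subset_span[OF X'] unfolding cycle_space_def by blast
  qed (use v simplicial_complex_finite[OF X'] in auto)
  moreover have "boundary_space K n ?X' ?q = boundary_space K n X ?q"
    unfolding boundary_space_def using chain_space_insert_other_card[of A "Suc ?q" K X] by simp
  moreover note dim_boundary_space_le_dim_cycle_space[OF X, of K ?q]
  ultimately show ?thesis unfolding homology_dim_def by simp
qed

lemma homology_dim_insert_face_other: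
  fixes K :: "'a::field itself" and l :: "nat set \<Rightarrow> 'a"
  assumes l: "l \<in> chain_space K X (card A)" "kdiff n l = kdiff n (unit_chain A)" and j: "j \<noteq> card A"
  shows "homology_dim K n (insert A X) j = homology_dim K n X j"
proof -
  let ?X' = "insert A X"
  have "cycle_space K n ?X' j = cycle_space K n X j"
    unfolding cycle_space_def using chain_space_insert_other_card[of A j K X] j by simp
  moreover have "boundary_space K n ?X' j = boundary_space K n X j"
  proof (cases "Suc j = card A")
    case False
    then show ?thesis unfolding boundary_space_def using chain_space_insert_other_card[of A "Suc j" K X] by simp
  next
    case True
    show ?thesis
    proof
      show "boundary_space K n X j \<subseteq> boundary_space K n ?X' j"
        unfolding boundary_space_def by (intro image_mono chain_space_mono) auto
      show "boundary_space K n ?X' j \<subseteq> boundary_space K n X j"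
      proof
        fix w assume "w \<in> boundary_space K n ?X' j"
        then obtain c where c: "c \<in> chain_space K ?X' (Suc j)" "w = kdiff n c" unfolding boundary_space_def by blast
        let ?c = "c - fscale (c A) (unit_chain A) + fscale (c A) l"
        have "?c \<in> chain_space K X (Suc j)"
          using chain_space_insert_replace_unit_chain[OF c(1)] l(1) True by simp
        moreover have "kdiff n ?c = w"
          using c(2) l(2) by (simp add: kdiff_add kdiff_diff kdiff_fscale)
        ultimately show "w \<in> boundary_space K n X j" unfolding boundary_space_def by (metis image_eqI)
      qed
    qed
  qed
  ultimately show ?thesis unfolding homology_dim_def by simp
qed

text \<open>An elementary collapse: adding a free pair \<open>F \<subset> insert b F\<close> changes neither cycles nor
  boundaries except that \<open>v = kdiff n (unit_chain (insert b F))\<close>, whose coefficient at \<open>F\<close> is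
  \<open>\<plusminus>1\<close>, becomes both a new cycle and a new boundary in degree \<open>card F\<close>.\<close>

context
  fixes K :: "'a::field itself" and n :: nat and X :: "nat set set" and F :: "nat set" and b :: nat
  assumes X: "simplicial_complex n X"
    and X': "simplicial_complex n (insert F (insert (insert b F) X))"
    and b: "b \<in> {1..n}" "b \<notin> F" and new: "F \<notin> X" "insert b F \<notin> X"
begin

private abbreviation (input) "X' \<equiv> insert F (insert (insert b F) X)"
private abbreviation (input) "G \<equiv> insert b F"
private abbreviation (input) "v \<equiv> kdiff n (unit_chain G) :: nat set \<Rightarrow> 'a"
private abbreviation (input) "s \<equiv> koszul_sign b F :: 'a"

private lemma card_G: "card G = Suc (card F)"
  using simplicial_complex_finite_face[OF X'] b(2) by simp

private lemma chain_space_X_X': "chain_space K X j \<subseteq> chain_space K X' j"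
  by (rule chain_space_mono) auto

private lemma span_X': "chain_space K X j \<subseteq> fs.span (unit_chain ` X')"
  using chain_space_X_X' simplicial_complex_chain_space_subset_span[OF X'] by blast

private lemma finite_X': "finite (unit_chain ` X')"
  using simplicial_complex_finite[OF X'] by simp

private lemma v_at_F: "v F = s"
  using kdiff_unit_chain_insert[OF b(2,1)] by simp

private lemma v_cycle: "v \<in> cycle_space K n X' (card F)"
  using kdiff_chain_space[OF X' unit_chain_in_chain_space[of G X' "Suc (card F)"]] card_G
  unfolding cycle_space_def by (simp add: kdiff_kdiff)

private lemma v_notin: "v \<notin> chain_space K X (card F)"
  using v_at_F koszul_sign_nonzero[of b F, where 'a='a] new(1) chain_space_vanish by metis

private lemma chain_space_other: "j \<noteq> card F \<Longrightarrow> j \<noteq> Suc (card F) \<Longrightarrow> chain_space K X' j = chain_space K X j"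
  using chain_space_insert_other_card[of F j K "insert G X"] chain_space_insert_other_card[of G j K X] card_G
  by simp

private lemma remove_F: "c \<in> chain_space K X' (card F) \<Longrightarrow> c - fscale (c F) (unit_chain F) \<in> chain_space K X (card F)"
  using chain_space_insert_diff_unit_chain chain_space_insert_other_card[of G "card F" K X] card_G by fastforce

private lemma remove_G:
  "c \<in> chain_space K X' (Suc (card F)) \<Longrightarrow> c - fscale (c G) (unit_chain G) \<in> chain_space K X (Suc (card F))"
  using chain_space_insert_other_card[of F "Suc (card F)" K "insert G X"]
  by (auto intro: chain_space_insert_diff_unit_chain)

private lemma cycle_space_top: "cycle_space K n X' (Suc (card F)) = cycle_space K n X (Suc (card F))"
proof
  show "cycle_space K n X (Suc (card F)) \<subseteq> cycle_space K n X' (Suc (card F))"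
    using chain_space_X_X' unfolding cycle_space_def by blast
  show "cycle_space K n X' (Suc (card F)) \<subseteq> cycle_space K n X (Suc (card F))"
  proof
    fix c assume c: "c \<in> cycle_space K n X' (Suc (card F))"
    define l where "l = c - fscale (c G) (unit_chain G)"
    have l: "l \<in> chain_space K X (Suc (card F))" unfolding l_def using remove_G c unfolding cycle_space_def by blast
    have "kdiff n l F = 0" using kdiff_chain_space[OF X l] new(1) chain_space_vanish by blast
    moreover have "kdiff n c = kdiff n l + fscale (c G) v"
      unfolding l_def by (simp add: kdiff_diff kdiff_fscale)
    moreover have "kdiff n c F = 0" using c unfolding cycle_space_def by simp
    ultimately have "c G = 0" using v_at_F koszul_sign_nonzero[of b F, where 'a='a] by simp
    then have "c = l" unfolding l_def by (simp add: fun_eq_iff)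
    then show "c \<in> cycle_space K n X (Suc (card F))" using l c unfolding cycle_space_def by simp
  qed
qed

private lemma dim_cycle_space: "fs.dim (cycle_space K n X' (card F)) = Suc (fs.dim (cycle_space K n X (card F)))"
proof (rule fs.dim_extend_by_vector[OF cycle_space_subspace cycle_space_subspace _ v_cycle _ _ _ finite_X'])
  show "cycle_space K n X (card F) \<subseteq> cycle_space K n X' (card F)"
    using chain_space_X_X' unfolding cycle_space_def by blast
  show "v \<notin> cycle_space K n X (card F)" using v_notin unfolding cycle_space_def by blast
  show "cycle_space K n X (card F) \<subseteq> fs.span (unit_chain ` X')"
    using span_X' cycle_space_subset_chain_space by blast
  show "\<forall>z\<in>cycle_space K n X' (card F). \<exists>k. z - fscale k v \<in> cycle_space K n X (card F)"
  proof
    fix z assume z: "z \<in> cycle_space K n X' (card F)"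
    define w where "w = z - fscale (z F * s) v"
    have w: "w \<in> cycle_space K n X' (card F)"
      unfolding w_def using z v_cycle by (intro fs.subspace_diff[OF cycle_space_subspace] fs.subspace_scale[OF cycle_space_subspace])
    have "w F = 0" unfolding w_def using v_at_F koszul_sign_square[of b F, where 'a='a] by (simp add: mult.assoc)
    then have "w \<in> chain_space K X (card F)" using remove_F[of w] w unfolding cycle_space_def by (simp add: fun_eq_iff)
    then show "\<exists>k. z - fscale k v \<in> cycle_space K n X (card F)"
      using w unfolding cycle_space_def w_def by blast
  qed
qed

private lemma dim_boundary_space: "fs.dim (boundary_space K n X' (card F)) = Suc (fs.dim (boundary_space K n X (card F)))"
proof (rule fs.dim_extend_by_vector[OF boundary_space_subspace boundary_space_subspace _ _ _ _ _ finite_X'])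
  show "boundary_space K n X (card F) \<subseteq> boundary_space K n X' (card F)"
    using chain_space_X_X' unfolding boundary_space_def by blast
  show "v \<in> boundary_space K n X' (card F)"
    unfolding boundary_space_def by (intro imageI unit_chain_in_chain_space) (simp_all add: card_G)
  show "v \<notin> boundary_space K n X (card F)"
    using v_notin boundary_space_subset_chain_space[OF X] by blast
  show "boundary_space K n X (card F) \<subseteq> fs.span (unit_chain ` X')"
    using span_X' boundary_space_subset_chain_space[OF X] by blast
  show "\<forall>z\<in>boundary_space K n X' (card F). \<exists>k. z - fscale k v \<in> boundary_space K n X (card F)"
  proof
    fix z assume "z \<in> boundary_space K n X' (card F)"
    then obtain c where c: "c \<in> chain_space K X' (Suc (card F))" "z = kdiff n c" unfolding boundary_space_def by blast
    have "z - fscale (c G) v = kdiff n (c - fscale (c G) (unit_chain G))"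
      unfolding c(2) by (simp add: kdiff_diff kdiff_fscale)
    then show "\<exists>k. z - fscale k v \<in> boundary_space K n X (card F)"
      unfolding boundary_space_def using remove_G[OF c(1)] by blast
  qed
qed

private lemma boundary_space_below: "Suc j = card F \<Longrightarrow> boundary_space K n X' j = boundary_space K n X j"
proof
  assume j: "Suc j = card F"
  show "boundary_space K n X j \<subseteq> boundary_space K n X' j"
    using chain_space_X_X' unfolding boundary_space_def by blast
  define r where "r = v - fscale s (unit_chain F)"
  have r: "r \<in> chain_space K X (card F)"
    unfolding r_def using remove_F[of v] v_cycle v_at_F unfolding cycle_space_def by simp
  have "kdiff n (unit_chain F) = fscale s (fscale s (kdiff n (unit_chain F :: nat set \<Rightarrow> 'a)))"
    using koszul_sign_square[of b F, where 'a='a] by (simp add: fun_eq_iff mult.assoc[symmetric])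
  also have "\<dots> = kdiff n (fscale (- s) r)"
    unfolding r_def by (simp add: kdiff_uminus kdiff_diff kdiff_fscale kdiff_kdiff fun_eq_iff)
  finally have dF: "kdiff n (unit_chain F) = kdiff n (fscale (- s) r)" .
  show "boundary_space K n X' j \<subseteq> boundary_space K n X j"
  proof
    fix z assume "z \<in> boundary_space K n X' j"
    then obtain c where c: "c \<in> chain_space K X' (card F)" "z = kdiff n c" unfolding boundary_space_def j by blast
    let ?c = "c - fscale (c F) (unit_chain F) + fscale (c F) (fscale (- s) r)"
    have "?c \<in> chain_space K X (Suc j)"
      using remove_F[OF c(1)] r j
      by (intro fs.subspace_add[OF chain_space_subspace] fs.subspace_scale[OF chain_space_subspace]) auto
    moreover have "z = kdiff n ?c"
      using dF unfolding c(2) by (simp add: kdiff_add kdiff_diff kdiff_fscale kdiff_uminus fun_eq_iff)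
    ultimately show "z \<in> boundary_space K n X j" unfolding boundary_space_def by blast
  qed
qed

lemma homology_dim_insert_collapse: "homology_dim K n X' j = homology_dim K n X j"
proof -
  consider "j = card F" | "j = Suc (card F)" | "Suc j = card F" | "j \<noteq> card F" "j \<noteq> Suc (card F)" "Suc j \<noteq> card F"
    by blast
  then show ?thesis
  proof cases
    case 1
    then show ?thesis unfolding homology_dim_def using dim_cycle_space dim_boundary_space by simp
  next
    case 2
    then show ?thesis unfolding homology_dim_def boundary_space_def
      using cycle_space_top chain_space_other[of "Suc (Suc (card F))"] by simp
  next
    case 3
    then show ?thesis unfolding homology_dim_def cycle_space_def
      using boundary_space_below chain_space_other[of j] by simp
  next
    case 4
    then show ?thesis unfolding homology_dim_def cycle_space_def boundary_space_def
      using chain_space_other[of j] chain_space_other[of "Suc j"] by simp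
  qed
qed

end

definition toggle_closed :: "nat \<Rightarrow> nat set set \<Rightarrow> bool" where
  "toggle_closed b N \<longleftrightarrow> (\<forall>F\<in>N. insert b F \<in> N \<and> F - {b} \<in> N)"

lemma toggle_closed_remove_pair:
  assumes "toggle_closed b N" "b \<notin> F"
  shows "toggle_closed b (N - {F, insert b F})"
  using assms unfolding toggle_closed_def
  by (auto simp: insert_Diff_if)

lemma simplicial_complex_insert_free_pair:
  assumes X: "simplicial_complex n X" and Y: "simplicial_complex n Y" and XY: "X \<subseteq> Y"
    and tog: "toggle_closed b (Y - X)" and F: "F \<in> Y - X" "b \<notin> F"
    and faces: "\<forall>x\<in>F. F - {x} \<in> X"
  shows "simplicial_complex n (insert F (insert (insert b F) X))"
  unfolding simplicial_complex_def
proof (intro conjI ballI)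
  have bF: "insert b F \<in> Y" using tog F(1) unfolding toggle_closed_def by blast
  fix H assume H: "H \<in> insert F (insert (insert b F) X)"
  then have "H \<in> Y" using F bF XY by blast
  then show "H \<subseteq> {1..n}" using Y unfolding simplicial_complex_def by blast
  fix x assume x: "x \<in> H"
  consider "H \<in> X" | "H = F" | "H = insert b F" "x = b" | "H = insert b F" "x \<in> F"
    using H x by blast
  then show "H - {x} \<in> insert F (insert (insert b F) X)"
  proof cases
    case 1
    then show ?thesis using X x unfolding simplicial_complex_def by blast
  next
    case 2
    then show ?thesis using faces x by blast
  next
    case 3
    then show ?thesis using F(2) by simp
  next
    case 4
    then have eq: "H - {x} = insert b (F - {x})" using F(2) by blast
    have "H - {x} \<in> Y" using Y bF 4(1) x unfolding simplicial_complex_def by blast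
    then have "insert b (F - {x}) \<in> Y" unfolding eq .
    moreover have "insert b (F - {x}) \<notin> Y - X"
    proof
      assume "insert b (F - {x}) \<in> Y - X"
      then have "insert b (F - {x}) - {b} \<in> Y - X" using tog unfolding toggle_closed_def by blast
      moreover have "insert b (F - {x}) - {b} = F - {x}" using F(2) by blast
      ultimately show False using faces 4(2) by auto
    qed
    ultimately show ?thesis unfolding eq by blast
  qed
qed

text \<open>If the new faces come in pairs \<open>F, insert b F\<close>, they can be collapsed away pair by
  pair, starting with a pair of least dimension (whose other faces are then old).\<close>

lemma homology_dim_cone:
  assumes "simplicial_complex n X" "simplicial_complex n Y" "X \<subseteq> Y" "b \<in> {1..n}"
    and "toggle_closed b (Y - X)"
  shows "homology_dim K n Y j = homology_dim K n X j"
  using assms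
proof (induction "card (Y - X)" arbitrary: X rule: less_induct)
  case less
  note X = less.prems(1) and Y = less.prems(2) and XY = less.prems(3) and b = less.prems(4)
    and tog = less.prems(5)
  show ?case
  proof (cases "Y = X")
    case False
    define M where "M = {F \<in> Y - X. b \<notin> F}"
    obtain F0 where "F0 \<in> Y - X" using False XY by blast
    then have "F0 - {b} \<in> M" using tog unfolding M_def toggle_closed_def by blast
    then obtain F where F: "F \<in> M" and min: "\<And>F'. F' \<in> M \<Longrightarrow> card F \<le> card F'"
      using ex_has_least_nat[of "\<lambda>F. F \<in> M" _ card] by metis
    have FY: "F \<in> Y - X" "b \<notin> F" "insert b F \<in> Y - X"
      using F tog unfolding M_def toggle_closed_def by auto
    have faces: "\<forall>x\<in>F. F - {x} \<in> X"
    proof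
      fix x assume x: "x \<in> F"
      have "card (F - {x}) < card F"
        using simplicial_complex_finite_face[OF Y] FY(1) x by (intro card_Diff1_less) auto
      then have "F - {x} \<notin> M" using min by fastforce
      moreover have "F - {x} \<in> Y" using Y FY(1) x unfolding simplicial_complex_def by blast
      ultimately show "F - {x} \<in> X" unfolding M_def using FY(2) by blast
    qed
    define X1 where "X1 = insert F (insert (insert b F) X)"
    have X1: "simplicial_complex n X1"
      unfolding X1_def using simplicial_complex_insert_free_pair[OF X Y XY tog FY(1,2) faces] .
    have "homology_dim K n X1 j = homology_dim K n X j"
      unfolding X1_def using X1 FY b by (intro homology_dim_insert_collapse[OF X]) (auto simp: X1_def)
    moreover have "Y - X1 = (Y - X) - {F, insert b F}" unfolding X1_def by blast
    then have "homology_dim K n Y j = homology_dim K n X1 j"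
      using FY X1 XY b toggle_closed_remove_pair[OF tog FY(2)] simplicial_complex_finite[OF Y]
      by (intro less.hyps[OF _ X1 Y]) (auto simp: X1_def intro!: psubset_card_mono)
    ultimately show ?thesis by simp
  qed simp
qed

section \<open>Monomial ideals and strong stability\<close>

definition ideal_of :: "nat \<Rightarrow> monomial set \<Rightarrow> monomial set" where
  "ideal_of n S = {v \<in> monomials n. \<exists>s\<in>S. s \<le> v}"

definition shift :: "monomial \<Rightarrow> nat \<Rightarrow> nat \<Rightarrow> monomial" where
  "shift u i j = (u(j := u j - 1))(i := u i + 1)"

definition weight :: "nat \<Rightarrow> monomial \<Rightarrow> nat" where
  "weight n u = (\<Sum>q=1..n. q * u q)"

lemma monomials_zero: "u \<in> monomials n \<Longrightarrow> k = 0 \<or> n < k \<Longrightarrow> u k = 0"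
  unfolding monomials_def by force

lemma monomialsI: "(\<And>k. u k \<noteq> 0 \<Longrightarrow> 1 \<le> k \<and> k \<le> n) \<Longrightarrow> u \<in> monomials n"
  unfolding monomials_def by auto

lemma finite_support: "u \<in> monomials n \<Longrightarrow> finite {i. u i \<noteq> 0}"
  by (rule finite_subset[of _ "{1..n}"]) (auto simp: monomials_def)

lemma support_nonempty: "0 < mdeg n u \<Longrightarrow> {i. u i \<noteq> 0} \<noteq> {}"
  unfolding mdeg_def by (metis (mono_tags, lifting) empty_Collect_eq less_irrefl sum.neutral)

lemma mdeg_mono: "(u :: monomial) \<le> v \<Longrightarrow> mdeg n u \<le> mdeg n v"
  unfolding mdeg_def by (intro sum_mono) (simp add: le_fun_def)

lemma mdeg_add: "mdeg n (u + v) = mdeg n u + mdeg n v"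
  unfolding mdeg_def by (simp add: sum.distrib)

lemma mdeg_indicator: "B \<subseteq> {1..n} \<Longrightarrow> mdeg n (indicator B) = card B"
  unfolding mdeg_def indicator_def by (simp add: Int_absorb1 flip: sum.inter_filter)

lemma monomial_eq_if_le_mdeg:
  assumes "u \<in> monomials n" "v \<in> monomials n" "u \<le> v" "mdeg n v \<le> mdeg n u"
  shows "u = v"
proof (rule ccontr)
  assume "u \<noteq> v"
  then obtain k where k: "u k \<noteq> v k" by (auto simp: fun_eq_iff)
  have "k \<in> {1..n}"
  proof (rule ccontr)
    assume "k \<notin> {1..n}"
    then have "k = 0 \<or> n < k" by auto
    then show False using k monomials_zero assms(1,2) by metis
  qed
  moreover have "u k < v k" using k le_funD[OF assms(3), of k] by simp
  ultimately have "mdeg n u < mdeg n v"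
    unfolding mdeg_def using assms(3) by (intro sum_strict_mono_ex1) (auto simp: le_fun_def)
  then show False using assms(4) by simp
qed

lemma sum_fun_upd_nat:
  assumes "finite A" "q \<in> A"
  shows "sum (f(q := y)) A + (f q :: nat) = sum f A + y"
  using assms by (simp add: sum.remove sum.cong[of "A - {q}" _ "f(q := y)" f])

lemma shift_apply: "i \<noteq> j \<Longrightarrow> shift u i j k = (if k = i then u i + 1 else if k = j then u j - 1 else u k)"
  by (simp add: shift_def)

lemma mdeg_shift:
  assumes "i \<noteq> j" "i \<in> {1..n}" "j \<in> {1..n}" "0 < u j"
  shows "mdeg n (shift u i j) = mdeg n u"
proof -
  have "mdeg n (shift u i j) + (u(j := u j - 1)) i = mdeg n (u(j := u j - 1)) + (u i + 1)"
    unfolding mdeg_def shift_def using assms sum_fun_upd_nat[of "{1..n}" i "u(j := u j - 1)" "u i + 1"] by simp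
  moreover have "mdeg n (u(j := u j - 1)) + u j = mdeg n u + (u j - 1)"
    unfolding mdeg_def using assms sum_fun_upd_nat[of "{1..n}" j u "u j - 1"] by simp
  ultimately show ?thesis using assms by simp
qed

lemma weight_shift:
  assumes "i \<noteq> j" "i \<in> {1..n}" "j \<in> {1..n}" "0 < u j"
  shows "weight n (shift u i j) + j = weight n u + i"
proof -
  let ?f = "\<lambda>q. q * u q"
  let ?g = "?f(j := j * (u j - 1))"
  have shifted: "(\<lambda>q. q * shift u i j q) = ?g(i := i * (u i + 1))"
    using assms(1) by (auto simp: shift_apply fun_eq_iff)
  have "weight n (shift u i j) + ?g i = sum ?g {1..n} + i * (u i + 1)"
    unfolding weight_def shifted using assms sum_fun_upd_nat[of "{1..n}" i ?g "i * (u i + 1)"] by simp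
  moreover have "sum ?g {1..n} + j * u j = weight n u + j * (u j - 1)"
    unfolding weight_def using assms sum_fun_upd_nat[of "{1..n}" j ?f "j * (u j - 1)"] by simp
  moreover have "j * u j = j * (u j - 1) + j" using assms(4) by (cases "u j") auto
  moreover have "?g i = i * u i" using assms(1) by simp
  ultimately show ?thesis by (simp only: distrib_left mult_1_right)
qed

lemma shift_monomials:
  assumes "u \<in> monomials n" "i \<in> {1..n}" "i \<noteq> j"
  shows "shift u i j \<in> monomials n"
  using assms by (intro monomialsI) (auto simp: shift_apply monomials_def split: if_splits)

lemma strongly_stable_monomial_ideal: "strongly_stable n J \<Longrightarrow> monomial_ideal n J"
  unfolding strongly_stable_def by blast

lemma monomial_ideal_subset: "monomial_ideal n J \<Longrightarrow> J \<subseteq> monomials n"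
  unfolding monomial_ideal_def by blast

lemma monomial_idealD: "monomial_ideal n J \<Longrightarrow> u \<in> J \<Longrightarrow> v \<in> monomials n \<Longrightarrow> u \<le> v \<Longrightarrow> v \<in> J"
  unfolding monomial_ideal_def by blast

lemma strongly_stable_shift:
  assumes "strongly_stable n J" "u \<in> J" "0 < u j" "1 \<le> i" "i < j"
  shows "shift u i j \<in> J"
  using assms unfolding strongly_stable_def shift_def by blast

lemma gens_subset: "gens J \<subseteq> J"
  unfolding gens_def by auto

lemma gens_minimal: "u \<in> gens J \<Longrightarrow> v \<in> J \<Longrightarrow> v \<le> u \<Longrightarrow> v = u"
  unfolding gens_def by auto

lemma gens_below:
  assumes J: "monomial_ideal n J" and "v \<in> J"
  obtains g where "g \<in> gens J" "g \<le> v"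
  using assms(2)
proof (induction "mdeg n v" arbitrary: v thesis rule: less_induct)
  case less
  show ?case
  proof (cases "v \<in> gens J")
    case False
    then obtain w where w: "w \<in> J" "w \<le> v" "w \<noteq> v" using less.prems(2) unfolding gens_def by auto
    have "w \<in> monomials n" "v \<in> monomials n" using w(1) less.prems(2) monomial_ideal_subset[OF J] by blast+
    then have "mdeg n w < mdeg n v" using monomial_eq_if_le_mdeg[of w n v] w(2,3) by linarith
    then obtain g where "g \<in> gens J" "g \<le> w" using less.hyps w(1) by metis
    then show ?thesis using w(2) less.prems(1) order_trans by blast
  qed (use less.prems in blast)
qed

lemma ideal_of_gens:
  assumes J: "monomial_ideal n J"
  shows "ideal_of n (gens J) = J"
proof
  show "ideal_of n (gens J) \<subseteq> J"
    unfolding ideal_of_def using monomial_idealD[OF J] gens_subset by blast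
  show "J \<subseteq> ideal_of n (gens J)"
    unfolding ideal_of_def using gens_below[OF J] monomial_ideal_subset[OF J] by blast
qed

lemma monomial_ideal_ideal_of: "monomial_ideal n (ideal_of n S)"
  unfolding monomial_ideal_def ideal_of_def using order_trans by blast

lemma ideal_of_mono: "S \<subseteq> S' \<Longrightarrow> ideal_of n S \<subseteq> ideal_of n S'"
  unfolding ideal_of_def by auto

lemma mmax_props:
  assumes "u \<in> monomials n" "0 < mdeg n u"
  shows "0 < u (mmax u)" "1 \<le> mmax u" "mmax u \<le> n" "\<And>k. mmax u < k \<Longrightarrow> u k = 0"
proof -
  have mem: "mmax u \<in> {i. u i \<noteq> 0}"
    unfolding mmax_def using Max_in[OF finite_support support_nonempty] assms by blast
  then show "0 < u (mmax u)" by simp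
  show "1 \<le> mmax u" "mmax u \<le> n" using mem assms(1) unfolding monomials_def by auto
  show "u k = 0" if "mmax u < k" for k
    using that Max_ge[OF finite_support[OF assms(1)], of k] unfolding mmax_def by fastforce
qed

lemma mmax_le_if_le:
  assumes "u \<in> monomials n" "0 < mdeg n u" "u \<le> v" "\<forall>k. m < k \<longrightarrow> v k = 0"
  shows "mmax u \<le> m"
proof -
  have "i \<le> m" if "u i \<noteq> 0" for i
    using that le_funD[OF assms(3), of i] assms(4) by (metis le_zero_eq not_le)
  then show ?thesis unfolding mmax_def using finite_support[OF assms(1)] support_nonempty[OF assms(2)] by simp
qed

lemma mmax_add_indicator:
  assumes "u \<in> monomials n" "0 < mdeg n u" "mmax u \<le> l"
  shows "mmax (u + indicator {l}) = l"
proof -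
  have "{i. (u + indicator {l}) i \<noteq> 0} = insert l {i. u i \<noteq> 0}"
    by (auto simp: indicator_def)
  then show ?thesis
    using assms finite_support support_nonempty unfolding mmax_def by (simp add: Max_insert)
qed

section \<open>The Eliahou-Kervaire formula\<close>

definition upper_koszul :: "nat \<Rightarrow> monomial set \<Rightarrow> monomial \<Rightarrow> nat set set" where
  "upper_koszul n J a = {F. F \<subseteq> {1..n} \<and> (\<forall>k\<in>F. 0 < a k) \<and> a - indicator F \<in> J}"

lemma betti_mg_eq_homology_dim: "betti_mg K n J i a = homology_dim K n (upper_koszul n J a) i"
proof -
  have "kchains K n J a j = chain_space K (upper_koszul n J a) j" for j
    unfolding kchains_def kbasis_def chain_space_def upper_koszul_def
    by (auto simp: indicator_def fun_diff_def of_bool_def)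
  then show ?thesis
    unfolding betti_mg_def homology_dim_def cycle_space_def boundary_space_def zero_fun_def by simp
qed

lemma minus_indicator_monomials: "a \<in> monomials n \<Longrightarrow> a - indicator F \<in> monomials n"
  by (rule monomialsI) (auto simp: monomials_def)

lemma upper_koszul_simplicial_complex:
  assumes J: "monomial_ideal n J" and a: "a \<in> monomials n"
  shows "simplicial_complex n (upper_koszul n J a)"
  unfolding simplicial_complex_def
proof (intro conjI ballI)
  fix F assume "F \<in> upper_koszul n J a"
  then show "F \<subseteq> {1..n}" unfolding upper_koszul_def by simp
next
  fix F x assume F: "F \<in> upper_koszul n J a" and "x \<in> F"
  have "a - indicator F \<le> a - indicator (F - {x})"
    unfolding le_fun_def by (auto simp: indicator_def)
  then have "a - indicator (F - {x}) \<in> J"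
    using F monomial_idealD[OF J _ minus_indicator_monomials[OF a]] unfolding upper_koszul_def by blast
  then show "F - {x} \<in> upper_koszul n J a" using F unfolding upper_koszul_def by auto
qed

lemma upper_koszul_mono: "J \<subseteq> J' \<Longrightarrow> upper_koszul n J a \<subseteq> upper_koszul n J' a"
  unfolding upper_koszul_def by auto

definition precedes :: "nat \<Rightarrow> monomial \<Rightarrow> monomial \<Rightarrow> bool" where
  "precedes n g u \<longleftrightarrow> mdeg n g < mdeg n u \<or> (mdeg n g = mdeg n u \<and> weight n g < weight n u)"

definition precedes_closed :: "nat \<Rightarrow> monomial set \<Rightarrow> monomial set \<Rightarrow> bool" where
  "precedes_closed n J S \<longleftrightarrow> (\<forall>g\<in>gens J. \<forall>s\<in>S. precedes n g s \<longrightarrow> g \<in> S)"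

lemma precedes_irrefl: "\<not> precedes n u u"
  unfolding precedes_def by simp

lemma precedes_trans: "precedes n a b \<Longrightarrow> precedes n b c \<Longrightarrow> precedes n a c"
  unfolding precedes_def by auto

lemma exists_precedes_maximal:
  assumes "finite A" "A \<noteq> {}"
  shows "\<exists>u\<in>A. \<forall>v\<in>A. \<not> precedes n u v"
  using assms
proof (induction A rule: finite_ne_induct)
  case (singleton x)
  then show ?case using precedes_irrefl by auto
next
  case (insert x F)
  then obtain y where y: "y \<in> F" "\<forall>v\<in>F. \<not> precedes n y v" by blast
  show ?case
  proof (cases "precedes n y x")
    case True
    then have "\<forall>v\<in>insert x F. \<not> precedes n x v"
      using y(2) precedes_irrefl precedes_trans by blast
    then show ?thesis by blast
  qed (use y in blast)
qed

lemma shift_from_tail_decreases: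
  assumes "m < q" "q \<le> n" "0 < g q"
  shows "(\<Sum>k\<in>{m<..n}. 2 * shift g m q k) + shift g m q m < (\<Sum>k\<in>{m<..n}. 2 * g k) + g m"
proof -
  have "(\<Sum>k\<in>{m<..n}. 2 * shift g m q k) = (\<Sum>k\<in>{m<..n}. ((\<lambda>k. 2 * g k)(q := 2 * (g q - 1))) k)"
    using assms(1) by (intro sum.cong) (auto simp: shift_apply)
  then have "(\<Sum>k\<in>{m<..n}. 2 * shift g m q k) + 2 * g q = (\<Sum>k\<in>{m<..n}. 2 * g k) + 2 * (g q - 1)"
    using sum_fun_upd_nat[of "{m<..n}" q "\<lambda>k. 2 * g k" "2 * (g q - 1)"] assms by simp
  then show ?thesis using assms by (simp add: shift_apply)
qed

lemma shift_from_mmax_decreases: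
  assumes "p < m" "0 < g m"
  shows "(\<Sum>k\<in>{m<..n}. 2 * shift g p m k) + shift g p m m < (\<Sum>k\<in>{m<..n}. 2 * g k) + g m"
proof -
  have "(\<Sum>k\<in>{m<..n}. 2 * shift g p m k) = (\<Sum>k\<in>{m<..n}. 2 * g k)"
    using assms(1) by (intro sum.cong) (auto simp: shift_apply)
  then show ?thesis using assms by (simp add: shift_apply)
qed

lemma exceeds_after_or_below_before:
  assumes g: "g \<in> monomials n" and u: "\<And>k. m < k \<Longrightarrow> u k = 0"
    and g_le: "\<forall>p. 1 \<le> p \<and> p < m \<longrightarrow> g p \<le> u p" and "\<not> g \<le> u" and deg: "mdeg n g < mdeg n u"
  shows "(\<exists>q. m < q \<and> q \<le> n \<and> 0 < g q) \<or> (0 < g m \<and> (\<exists>p. 1 \<le> p \<and> p < m \<and> g p < u p))"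
proof (cases "\<exists>q. m < q \<and> q \<le> n \<and> 0 < g q")
  case False
  then have g_tail: "g k = 0" if "m < k" for k using that monomials_zero[OF g, of k] by (cases "k \<le> n") auto
  obtain k where k: "u k < g k" using assms(4) unfolding le_fun_def by (meson not_le)
  have "k = m"
  proof (rule ccontr)
    assume "k \<noteq> m"
    then have "k = 0 \<or> (1 \<le> k \<and> k < m) \<or> m < k" by linarith
    then show False using k g_le g_tail monomials_zero[OF g, of k] by auto
  qed
  with k have "u m < g m" by simp
  moreover have "\<exists>p. 1 \<le> p \<and> p < m \<and> g p < u p"
  proof (rule ccontr)
    assume no_p: "\<not> ?thesis"
    have "\<forall>k\<in>{1..n}. u k \<le> g k"
    proof
      fix k assume "k \<in> {1..n}"
      then show "u k \<le> g k" using no_p \<open>u m < g m\<close> u[of k] by (cases k m rule: linorder_cases) auto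
    qed
    then have "mdeg n u \<le> mdeg n g" unfolding mdeg_def by (intro sum_mono) auto
    then show False using deg by simp
  qed
  ultimately show ?thesis by simp
qed simp

text \<open>If \<open>g\<close> did not exceed \<open>u\<close> before \<open>x\<^bsub>mmax u\<^esub>\<close>, strong stability would move the exponents of
  \<open>g\<close> from variables after \<open>x\<^bsub>mmax u\<^esub>\<close> to \<open>x\<^bsub>mmax u\<^esub>\<close>, and from there to earlier variables
  in which \<open>g\<close> is below \<open>u\<close>, until \<open>g\<close> divides \<open>u\<close>, contradicting the minimality of \<open>u\<close>.\<close>

lemma strongly_stable_lower_degree_exceeds:
  assumes J: "strongly_stable n J" and u: "u \<in> gens J" "0 < mdeg n u"
    and g: "g \<in> J" "mdeg n g < mdeg n u"
  shows "\<exists>p. 1 \<le> p \<and> p < mmax u \<and> u p < g p"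
proof (rule ccontr)
  define m where "m = mmax u"
  have J_mon: "J \<subseteq> monomials n" using monomial_ideal_subset[OF strongly_stable_monomial_ideal[OF J]] .
  have m: "1 \<le> m" "m \<le> n" "\<And>k. m < k \<Longrightarrow> u k = 0"
    using mmax_props[of u n] u gens_subset J_mon unfolding m_def by auto
  assume "\<not> ?thesis"
  then have "\<forall>p. 1 \<le> p \<and> p < m \<longrightarrow> g p \<le> u p" unfolding m_def by (meson not_le)
  with g show False
  proof (induction "(\<Sum>k\<in>{m<..n}. 2 * g k) + g m" arbitrary: g rule: less_induct)
    case (less g)
    have "\<not> g \<le> u" using gens_minimal[OF u(1) less.prems(1)] less.prems(2) by auto
    then consider q where "m < q" "q \<le> n" "0 < g q" | p where "0 < g m" "1 \<le> p" "p < m" "g p < u p"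
      using exceeds_after_or_below_before[OF _ m(3) less.prems(3)] less.prems(1,2) J_mon by blast
    then show False
    proof cases
      case (1 q)
      show False
      proof (rule less.hyps[of "shift g m q"])
        show "shift g m q \<in> J" using strongly_stable_shift[OF J less.prems(1) 1(3) m(1) 1(1)] .
        show "mdeg n (shift g m q) < mdeg n u" using mdeg_shift[of m q n g] 1 m less.prems(2) by simp
        show "\<forall>p. 1 \<le> p \<and> p < m \<longrightarrow> shift g m q p \<le> u p" using less.prems(3) 1(1) by (simp add: shift_apply)
      qed (rule shift_from_tail_decreases[of m q n g, OF 1])
    next
      case (2 p)
      show False
      proof (rule less.hyps[of "shift g p m"])
        show "shift g p m \<in> J" using strongly_stable_shift[OF J less.prems(1) 2(1-3)] .
        show "mdeg n (shift g p m) < mdeg n u" using mdeg_shift[of p m n g] 2 m less.prems(2) by simp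
        show "\<forall>p'. 1 \<le> p' \<and> p' < m \<longrightarrow> shift g p m p' \<le> u p'" using less.prems(3) 2 by (auto simp: shift_apply)
      qed (rule shift_from_mmax_decreases[of p m g n, OF 2(3,1)])
    qed
  qed
qed

lemma weight_diff_eq_sum:
  "int (weight n g) - int (weight n u) - int m * (int (mdeg n g) - int (mdeg n u))
    = (\<Sum>q=1..n. (int q - int m) * (int (g q) - int (u q)))"
  unfolding weight_def mdeg_def
  by (simp add: algebra_simps sum_subtractf sum.distrib sum_distrib_left of_nat_sum)

text \<open>Under these hypotheses every summand of \<open>weight_diff_eq_sum\<close> is nonnegative.\<close>

lemma eq_if_weight_le:
  assumes g: "g \<in> monomials n" and u: "u \<in> monomials n" and m: "m \<in> {1..n}"
    and u_tail: "\<forall>k. m < k \<longrightarrow> u k = 0" and g_le: "\<forall>p. 1 \<le> p \<and> p < m \<longrightarrow> g p \<le> u p"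
    and deg: "mdeg n g = mdeg n u" and wt: "weight n g \<le> weight n u"
  shows "g = u"
proof -
  define T where "T q = (int q - int m) * (int (g q) - int (u q))" for q
  have T_nonneg: "0 \<le> T q" if "q \<in> {1..n}" for q
    using that g_le u_tail unfolding T_def
    by (cases q m rule: linorder_cases) (auto intro: mult_nonpos_nonpos)
  have "(\<Sum>q=1..n. T q) \<le> 0"
    using weight_diff_eq_sum[of n g u m] deg wt unfolding T_def by simp
  then have "\<forall>q\<in>{1..n}. T q = 0"
    using T_nonneg sum_nonneg_eq_0_iff[of "{1..n}" T] sum_nonneg[of "{1..n}" T] by auto
  then have off_m: "g q = u q" if "q \<in> {1..n}" "q \<noteq> m" for q
    using that unfolding T_def by auto
  have "mdeg n g = g m + (\<Sum>q\<in>{1..n} - {m}. g q)" "mdeg n u = u m + (\<Sum>q\<in>{1..n} - {m}. u q)"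
    unfolding mdeg_def using m by (simp_all add: sum.remove)
  moreover have "(\<Sum>q\<in>{1..n} - {m}. g q) = (\<Sum>q\<in>{1..n} - {m}. u q)" using off_m by (intro sum.cong) auto
  ultimately have "g m = u m" using deg by simp
  then have "g q = u q" for q
    using off_m monomials_zero[OF g, of q] monomials_zero[OF u, of q] by (cases "q \<in> {1..n}") auto
  then show ?thesis by blast
qed

locale ek_removal =
  fixes n :: nat and J S :: "monomial set" and u :: monomial
  assumes stable: "strongly_stable n J" and gens_pos: "\<forall>g\<in>gens J. 0 < mdeg n g"
    and S_gens: "S \<subseteq> gens J" and S_finite: "finite S" and S_closed: "precedes_closed n J S"
    and u_in: "u \<in> S" and u_max: "\<forall>v\<in>S. \<not> precedes n u v"
begin

lemma ideal: "monomial_ideal n J"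
  using strongly_stable_monomial_ideal[OF stable] .

lemma J_monomials: "g \<in> J \<Longrightarrow> g \<in> monomials n"
  using monomial_ideal_subset[OF ideal] by blast

lemma u_gen: "u \<in> gens J"
  using S_gens u_in by blast

lemma u_mon: "u \<in> monomials n"
  using u_gen gens_subset J_monomials by blast

lemma u_pos: "0 < mdeg n u"
  using gens_pos u_gen by blast

lemma mmax_u: "0 < u (mmax u)" "1 \<le> mmax u" "mmax u \<le> n" "\<And>k. mmax u < k \<Longrightarrow> u k = 0"
  using mmax_props[OF u_mon u_pos] by auto

text \<open>If \<open>w\<close> exceeds \<open>u\<close> in a variable \<open>x\<^sub>p\<close> with \<open>p < mmax u\<close>, then \<open>w\<close> is divisible by
  \<open>shift u p (mmax u)\<close>, whose generators precede \<open>u\<close> and hence lie in \<open>S - {u}\<close>.\<close>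

lemma mem_ideal_remove_if_exceeds:
  assumes w: "w \<in> monomials n" "u \<le> w" and p: "1 \<le> p" "p < mmax u" "u p < w p"
  shows "w \<in> ideal_of n (S - {u})"
proof -
  define m where "m = mmax u"
  have m: "1 \<le> m" "m \<le> n" "0 < u m" "p < m" using mmax_u p unfolding m_def by auto
  define v where "v = shift u p m"
  have "u \<in> J" using u_gen gens_subset by blast
  have v: "v \<in> J" unfolding v_def using strongly_stable_shift[OF stable \<open>u \<in> J\<close> m(3) p(1) m(4)] .
  have v_deg: "mdeg n v = mdeg n u" and v_wt: "weight n v + m = weight n u + p"
    unfolding v_def using mdeg_shift[of p m n u] weight_shift[of p m n u] p m by simp_all
  obtain g where g: "g \<in> gens J" "g \<le> v" using gens_below[OF ideal v] by blast
  have "precedes n g u"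
  proof (cases "mdeg n g < mdeg n u")
    case False
    then have "g = v"
      using monomial_eq_if_le_mdeg[OF _ _ g(2)] g(1) v gens_subset J_monomials v_deg by (metis not_le subsetD)
    then show ?thesis unfolding precedes_def using v_deg v_wt m(4) by simp
  qed (simp add: precedes_def)
  then have "g \<in> S - {u}" using S_closed g(1) u_in precedes_irrefl unfolding precedes_closed_def by blast
  moreover have "v \<le> w"
  proof (rule le_funI)
    fix k show "v k \<le> w k" using le_funD[OF w(2), of k] p(3) m(4) by (auto simp: v_def shift_apply)
  qed
  ultimately show ?thesis unfolding ideal_of_def using w(1) g(2) order_trans by blast
qed

lemma notin_ideal_remove:
  assumes w: "\<forall>p. 1 \<le> p \<and> p < mmax u \<longrightarrow> w p \<le> u p"
  shows "w \<notin> ideal_of n (S - {u})"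
proof
  assume "w \<in> ideal_of n (S - {u})"
  then obtain g where g: "g \<in> S" "g \<noteq> u" "g \<le> w" unfolding ideal_of_def by blast
  have g_gen: "g \<in> gens J" using g(1) S_gens by blast
  then have g_mon: "g \<in> monomials n" using gens_subset J_monomials by blast
  have g_le: "\<forall>p. 1 \<le> p \<and> p < mmax u \<longrightarrow> g p \<le> u p"
    using w le_funD[OF g(3)] order_trans by blast
  have "\<not> precedes n u g" using u_max g(1) by blast
  then consider "mdeg n g < mdeg n u" | "mdeg n g = mdeg n u" "weight n g \<le> weight n u"
    unfolding precedes_def by linarith
  then show False
  proof cases
    case 1
    then show False
      using strongly_stable_lower_degree_exceeds[OF stable u_gen u_pos _ 1] g_gen gens_subset g_le
      by (meson not_le subsetD)
  next
    case 2
    then have "g = u" using eq_if_weight_le[OF g_mon u_mon _ _ g_le] mmax_u by auto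
    then show False using g(2) by simp
  qed
qed

lemma removed_monomials_iff:
  assumes "w \<in> monomials n"
  shows "w \<in> ideal_of n S - ideal_of n (S - {u}) \<longleftrightarrow> u \<le> w \<and> (\<forall>p. 1 \<le> p \<and> p < mmax u \<longrightarrow> w p \<le> u p)"
proof
  assume w: "w \<in> ideal_of n S - ideal_of n (S - {u})"
  then have "u \<le> w" unfolding ideal_of_def by blast
  with w show "u \<le> w \<and> (\<forall>p. 1 \<le> p \<and> p < mmax u \<longrightarrow> w p \<le> u p)"
    using mem_ideal_remove_if_exceeds[OF assms] by (meson DiffD2 not_le)
next
  assume "u \<le> w \<and> (\<forall>p. 1 \<le> p \<and> p < mmax u \<longrightarrow> w p \<le> u p)"
  then show "w \<in> ideal_of n S - ideal_of n (S - {u})"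
    using notin_ideal_remove assms u_in unfolding ideal_of_def by blast
qed

end

text \<open>The pairs \<open>(s, B)\<close> counted here are the Eliahou-Kervaire symbols of multidegree \<open>a\<close>.\<close>

definition ek_count :: "monomial set \<Rightarrow> monomial \<Rightarrow> nat \<Rightarrow> nat" where
  "ek_count S a j = card {(s, B). s \<in> S \<and> B \<subseteq> {1..<mmax s} \<and> card B = j \<and> a = s + indicator B}"

lemma indicator_eq_indicator_iff: "(indicator A :: 'a \<Rightarrow> nat) = indicator B \<longleftrightarrow> A = B"
proof
  assume "indicator A = (indicator B :: 'a \<Rightarrow> nat)"
  then have "x \<in> A \<longleftrightarrow> x \<in> B" for x
    using indicator_eq_1_iff[of A x, where 'a=nat] indicator_eq_1_iff[of B x, where 'a=nat] by simp
  then show "A = B" by blast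
qed simp

lemma ek_count_empty: "ek_count {} a j = 0"
  unfolding ek_count_def by simp

lemma ek_count_remove:
  assumes "finite S" "u \<in> S"
  shows "ek_count S a j = ek_count (S - {u}) a j
     + (if \<exists>B. B \<subseteq> {1..<mmax u} \<and> card B = j \<and> a = u + indicator B then 1 else 0)"
proof -
  let ?P = "\<lambda>s B. B \<subseteq> {1..<mmax s} \<and> card B = j \<and> a = s + indicator B"
  have fin: "finite {(s, B). s \<in> T \<and> ?P s B}" if "finite T" for T
    by (rule finite_subset[of _ "Sigma T (\<lambda>s. Pow {1..<mmax s})"]) (use that in auto)
  have split: "{(s, B). s \<in> S \<and> ?P s B} = {(s, B). s \<in> S - {u} \<and> ?P s B} \<union> {(s, B). s \<in> {u} \<and> ?P s B}"
    using assms by auto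
  have "card {(s, B). s \<in> {u} \<and> ?P s B} = (if \<exists>B. ?P u B then 1 else 0)"
  proof (cases "\<exists>B. ?P u B")
    case True
    then obtain B0 where B0: "?P u B0" by blast
    have "{(s, B). s \<in> {u} \<and> ?P s B} = {(u, B0)}"
    proof (intro equalityI subsetI)
      fix x assume "x \<in> {(s, B). s \<in> {u} \<and> ?P s B}"
      then obtain B where x: "x = (u, B)" "?P u B" by blast
      then have "u + indicator B = u + indicator B0" using B0 by simp
      then show "x \<in> {(u, B0)}" using x(1) by (simp only: add_left_cancel indicator_eq_indicator_iff) simp
    qed (use B0 in simp)
    then show ?thesis using True by simp
  next
    case False
    then have "{(s, B). s \<in> {u} \<and> ?P s B} = {}" by blast
    then show ?thesis using False by (simp only: if_False card.empty)
  qed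
  moreover have "card {(s, B). s \<in> S \<and> ?P s B}
      = card {(s, B). s \<in> S - {u} \<and> ?P s B} + card {(s, B). s \<in> {u} \<and> ?P s B}"
    unfolding split using assms by (intro card_Un_disjoint fin) auto
  ultimately show ?thesis unfolding ek_count_def by simp
qed

locale ek_removal_at = ek_removal +
  fixes a :: monomial
  assumes a_mon: "a \<in> monomials n"
begin

abbreviation (input) "X \<equiv> upper_koszul n (ideal_of n (S - {u})) a"
abbreviation (input) "Y \<equiv> upper_koszul n (ideal_of n S) a"

lemma X: "simplicial_complex n X" and Y: "simplicial_complex n Y"
  using upper_koszul_simplicial_complex[OF monomial_ideal_ideal_of a_mon] by auto

lemma XY: "X \<subseteq> Y"
  by (intro upper_koszul_mono ideal_of_mono) auto

lemma new_faces_iff: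
  "F \<in> Y - X \<longleftrightarrow> F \<subseteq> {1..n} \<and> (\<forall>k\<in>F. 0 < a k) \<and> u \<le> a - indicator F
      \<and> (\<forall>p. 1 \<le> p \<and> p < mmax u \<longrightarrow> (a - indicator F) p \<le> u p)"
  using removed_monomials_iff[OF minus_indicator_monomials[OF a_mon, of F]]
  unfolding upper_koszul_def by auto

text \<open>The new faces then form a cone with apex \<open>b\<close>.\<close>

lemma homology_dim_if_exceeds_after_mmax:
  assumes b: "mmax u \<le> b" "u b < a b"
  shows "homology_dim K n Y j = homology_dim K n X j"
proof (rule homology_dim_cone[OF X Y XY])
  show b_range: "b \<in> {1..n}" using b mmax_u(2) monomials_zero[OF a_mon, of b] by (cases "n < b") auto
  show "toggle_closed b (Y - X)"
    unfolding toggle_closed_def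
  proof
    fix F assume "F \<in> Y - X"
    then have F: "F \<subseteq> {1..n}" "\<forall>k\<in>F. 0 < a k" "u \<le> a - indicator F"
      "\<forall>p. 1 \<le> p \<and> p < mmax u \<longrightarrow> (a - indicator F) p \<le> u p"
      using new_faces_iff by blast+
    have "u \<le> a - indicator (insert b F) \<and> u \<le> a - indicator (F - {b})"
    proof (intro conjI le_funI)
      fix k
      show "u k \<le> (a - indicator (insert b F)) k" "u k \<le> (a - indicator (F - {b})) k"
        using le_funD[OF F(3), of k] b(2) by (auto simp: indicator_def)
    qed
    moreover have "\<forall>p. 1 \<le> p \<and> p < mmax u \<longrightarrow> (a - indicator (insert b F)) p \<le> u p \<and> (a - indicator (F - {b})) p \<le> u p"
      using F(4) b(1) by (auto simp: indicator_def)
    ultimately show "insert b F \<in> Y - X \<and> F - {b} \<in> Y - X"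
      unfolding new_faces_iff using F(1,2) b_range b(2) by auto
  qed
qed

end

context ek_removal_at
begin

definition excess :: "nat set" where
  "excess = {p. 1 \<le> p \<and> p < mmax u \<and> u p < a p}"

lemma excess_subset: "excess \<subseteq> {1..<mmax u}"
  unfolding excess_def by auto

lemma finite_excess: "finite excess"
  using excess_subset finite_subset by blast

lemma excess_unique:
  assumes "B \<subseteq> {1..<mmax u}" "a = u + indicator B"
  shows "B = excess"
  unfolding excess_def using assms(1) by (subst assms(2)) (force simp: indicator_def)

lemma ek_term_iff:
  "(\<exists>B. B \<subseteq> {1..<mmax u} \<and> card B = j \<and> a = u + indicator B) \<longleftrightarrow> a = u + indicator excess \<and> j = card excess"
proof
  assume "\<exists>B. B \<subseteq> {1..<mmax u} \<and> card B = j \<and> a = u + indicator B"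
  then obtain B where B: "B \<subseteq> {1..<mmax u}" "card B = j" "a = u + indicator B" by blast
  then have "B = excess" by (intro excess_unique)
  then show "a = u + indicator excess \<and> j = card excess" using B(2,3) by simp
qed (use excess_subset in blast)

lemma not_exceeds_after_mmax_if_new_face:
  assumes "a = u + indicator excess" "mmax u \<le> b"
  shows "\<not> u b < a b"
proof -
  have "b \<notin> excess" using excess_subset assms(2) by auto
  then show ?thesis by (subst assms(1)) simp
qed

lemma new_face_eq_excess:
  assumes below: "\<forall>b. mmax u \<le> b \<longrightarrow> a b \<le> u b" and "F \<in> Y - X"
  shows "F = excess" "a = u + indicator excess"
proof -
  have F: "F \<subseteq> {1..n}" "\<forall>k\<in>F. 0 < a k" "u \<le> a - indicator F"
    "\<forall>p. 1 \<le> p \<and> p < mmax u \<longrightarrow> (a - indicator F) p \<le> u p"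
    using assms(2) new_faces_iff by blast+
  have le: "u k \<le> a k - indicator F k" for k using le_funD[OF F(3), of k] by simp
  have F_below: "F \<subseteq> {1..<mmax u}"
  proof
    fix k assume k: "k \<in> F"
    have "\<not> mmax u \<le> k" using below le[of k] F(2) k by fastforce
    then show "k \<in> {1..<mmax u}" using F(1) k by auto
  qed
  have "a k = u k + indicator F k" for k
  proof (cases "1 \<le> k \<and> k < mmax u")
    case True
    then show ?thesis using le[of k] F(2,4) by (fastforce simp: indicator_def)
  next
    case False
    then have "k \<notin> F" using F_below by auto
    moreover have "a k \<le> u k"
      using below False monomials_zero[OF a_mon, of k] by (cases "k = 0") auto
    ultimately show ?thesis using le[of k] by simp
  qed
  then have "a = u + indicator F" by (simp add: fun_eq_iff)
  then show "F = excess" "a = u + indicator excess" using excess_unique[OF F_below] by simp_all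
qed

lemma excess_new_face:
  assumes "a = u + indicator excess"
  shows "excess \<in> Y - X"
proof -
  have "a - indicator excess = u" by (subst assms) (simp add: fun_eq_iff)
  moreover have "excess \<subseteq> {1..n}" using excess_subset mmax_u(3) by auto
  moreover have "\<forall>k\<in>excess. 0 < a k" unfolding excess_def by auto
  ultimately show ?thesis unfolding new_faces_iff by simp
qed

text \<open>The boundary of the single new face is a cycle of \<open>X\<close> in degree \<open>card excess - 1\<close>, where
  \<open>X\<close> has no homology because all symbols \<open>(s, B)\<close> of \<open>S - {u}\<close> in multidegree \<open>a\<close> would have
  \<open>mdeg n s > mdeg n u\<close>, contradicting the maximality of \<open>u\<close>.\<close>

lemma ek_count_remove_excess_pred:
  assumes "a = u + indicator excess" "excess \<noteq> {}"
  shows "ek_count (S - {u}) a (card excess - 1) = 0"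
proof -
  have "False" if s: "s \<in> S" "B \<subseteq> {1..<mmax s}" "card B = card excess - 1" "a = s + indicator B" for s B
  proof -
    have s_gen: "s \<in> gens J" using s(1) S_gens by blast
    then have "mmax s \<le> n" using mmax_props(3) gens_pos gens_subset J_monomials by blast
    then have "mdeg n a = mdeg n s + card B"
      unfolding s(4) mdeg_add using mdeg_indicator[of B n] s(2) by fastforce
    moreover have "mdeg n (u + indicator excess) = mdeg n u + card excess"
      unfolding mdeg_add using mdeg_indicator[of excess n] excess_subset mmax_u(3) by fastforce
    then have "mdeg n a = mdeg n u + card excess" by (simp only: assms(1)[symmetric])
    moreover have "card excess \<noteq> 0" using assms(2) finite_excess by simp
    ultimately have "precedes n u s" unfolding precedes_def using s(3) by linarith
    then show False using u_max s(1) by blast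
  qed
  then have "{(s, B). s \<in> S - {u} \<and> B \<subseteq> {1..<mmax s} \<and> card B = card excess - 1 \<and> a = s + indicator B} = {}"
    by blast
  then show ?thesis unfolding ek_count_def by (simp only: card.empty)
qed

lemma boundary_of_excess:
  fixes K :: "'a::field itself"
  assumes IH: "\<forall>j. homology_dim K n X j = ek_count (S - {u}) a j"
    and a: "a = u + indicator excess" and Y_eq: "Y = insert excess X"
  shows "\<exists>l \<in> chain_space K X (card excess). kdiff n l = kdiff n (unit_chain excess :: nat set \<Rightarrow> 'a)"
proof (cases "excess = {}")
  case True
  then have "kdiff n (unit_chain excess :: nat set \<Rightarrow> 'a) = kdiff n 0"
    by (auto simp: kdiff_def unit_chain_apply fun_eq_iff)
  then show ?thesis by (metis chain_space_subspace fs.subspace_0)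
next
  case False
  define q where "q = card excess - 1"
  have card: "card excess = Suc q" using False finite_excess unfolding q_def by (simp add: card_gt_0_iff)
  define z where "z = kdiff n (unit_chain excess :: nat set \<Rightarrow> 'a)"
  have "z \<in> chain_space K Y q"
    unfolding z_def using kdiff_chain_space[OF Y unit_chain_in_chain_space] card Y_eq by auto
  then have "z \<in> cycle_space K n X q"
    using chain_space_insert_other_card[of excess q K X] card Y_eq
    unfolding cycle_space_def z_def by (simp add: kdiff_kdiff)
  moreover have "homology_dim K n X q = 0"
    using IH ek_count_remove_excess_pred[OF a False] unfolding q_def by simp
  ultimately have "z \<in> boundary_space K n X q"
    using cycle_space_subset_boundary_space_if_homology_zero[OF X] by blast
  then obtain l where "l \<in> chain_space K X (Suc q)" "kdiff n l = z" unfolding boundary_space_def by blast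
  then show ?thesis unfolding card z_def by blast
qed

lemma homology_dim_remove_step:
  fixes K :: "'a::field itself"
  assumes IH: "\<forall>j. homology_dim K n X j = ek_count (S - {u}) a j"
  shows "homology_dim K n Y j = ek_count S a j"
proof -
  have count: "ek_count S a j = ek_count (S - {u}) a j + (if a = u + indicator excess \<and> j = card excess then 1 else 0)"
    using ek_count_remove[OF S_finite u_in, of a j] ek_term_iff by simp
  consider (cone) b where "mmax u \<le> b" "u b < a b" | (face) "\<forall>b. mmax u \<le> b \<longrightarrow> a b \<le> u b" "a = u + indicator excess"
    | (same) "\<forall>b. mmax u \<le> b \<longrightarrow> a b \<le> u b" "a \<noteq> u + indicator excess"
    by (meson not_le)
  then show ?thesis
  proof cases
    case cone
    then have "a \<noteq> u + indicator excess" using not_exceeds_after_mmax_if_new_face by blast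
    then show ?thesis using homology_dim_if_exceeds_after_mmax[OF cone, of K j] IH count by simp
  next
    case face
    have Y_eq: "Y = insert excess X"
      using new_face_eq_excess(1)[OF face(1)] excess_new_face[OF face(2)] XY by blast
    obtain l where l: "l \<in> chain_space K X (card excess)" "kdiff n l = kdiff n (unit_chain excess)"
      using boundary_of_excess[OF IH face(2) Y_eq] by blast
    have "excess \<notin> X" using excess_new_face[OF face(2)] by blast
    then show ?thesis
      unfolding Y_eq count using IH face(2) homology_dim_insert_face[OF X _ _ l] homology_dim_insert_face_other[OF l]
        Y Y_eq by auto
  next
    case same
    then have "Y = X" using new_face_eq_excess(2) XY by blast
    then show ?thesis using IH count same(2) by simp
  qed
qed

end

text \<open>Removing the generators of \<open>J\<close> one at a time, always a \<open>precedes\<close>-maximal one, leaves an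
  initial segment \<open>S\<close> of \<open>gens J\<close> at every stage.\<close>

lemma homology_dim_upper_koszul_ideal_of:
  fixes K :: "'a::field itself"
  assumes J: "strongly_stable n J" and pos: "\<forall>g\<in>gens J. 0 < mdeg n g"
    and S: "finite S" "S \<subseteq> gens J" "precedes_closed n J S" and a: "a \<in> monomials n"
  shows "homology_dim K n (upper_koszul n (ideal_of n S) a) j = ek_count S a j"
  using S
proof (induction S arbitrary: j rule: finite_remove_induct)
  case empty
  have "upper_koszul n (ideal_of n {}) a = {}" unfolding upper_koszul_def ideal_of_def by simp
  then show ?case by (simp add: homology_dim_empty ek_count_empty)
next
  case (remove S)
  obtain u where u: "u \<in> S" "\<forall>v\<in>S. \<not> precedes n u v"
    using exists_precedes_maximal[OF remove.hyps(1,2)] by blast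
  interpret ek_removal_at n J S u a
    using J pos remove.prems remove.hyps(1) u a by unfold_locales auto
  have "precedes_closed n J (S - {u})"
    using remove.prems(2) u(2) unfolding precedes_closed_def by blast
  then have "\<forall>j. homology_dim K n X j = ek_count (S - {u}) a j"
    using remove.IH[OF u(1)] remove.prems(1) by blast
  then show ?case by (rule homology_dim_remove_step)
qed

lemma betti_mg_strongly_stable:
  assumes J: "strongly_stable n J" and pos: "\<forall>g\<in>gens J. 0 < mdeg n g" and fin: "finite (gens J)"
    and a: "a \<in> monomials n"
  shows "betti_mg K n J j a = ek_count (gens J) a j"
  using homology_dim_upper_koszul_ideal_of[OF J pos fin subset_refl _ a]
  unfolding betti_mg_eq_homology_dim ideal_of_gens[OF strongly_stable_monomial_ideal[OF J]] precedes_closed_def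
  by blast

lemma sum_card_fibres:
  assumes "finite L" "finite T"
  shows "(\<Sum>s\<in>T. card {x \<in> L. h x = s}) = card {x \<in> L. h x \<in> T}"
proof -
  have "(\<Sum>s\<in>T. card {x \<in> L. h x = s}) = (\<Sum>s\<in>T. \<Sum>x\<in>{x \<in> {x \<in> L. h x \<in> T}. h x = s}. (1::nat))"
    by (intro sum.cong refl) (auto intro!: arg_cong[where f=card])
  also have "\<dots> = card {x \<in> L. h x \<in> T}"
    by (subst sum.group) (use assms in auto)
  finally show ?thesis .
qed

theorem betti_strongly_stable:
  assumes J: "strongly_stable n J" and pos: "\<forall>g\<in>gens J. 0 < mdeg n g" and fin: "finite (gens J)"
  shows "betti K n J i = (\<Sum>u\<in>gens J. (mmax u - 1) choose i)"
proof -
  define P where "P = Sigma (gens J) (\<lambda>s. {B. B \<subseteq> {1..<mmax s} \<and> card B = i})"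
  define sym where "sym x = fst x + indicator (snd x)" for x :: "monomial \<times> nat set"
  define fibre where "fibre a = card {x \<in> P. sym x = a}" for a
  have finP: "finite P" unfolding P_def using fin by (intro finite_SigmaI) auto
  have betti_mg: "betti_mg K n J i a = fibre a" if "a \<in> monomials n" for a
    unfolding betti_mg_strongly_stable[OF J pos fin that] ek_count_def fibre_def P_def sym_def
    by (rule arg_cong[where f=card]) auto
  have sym_mon: "sym x \<in> monomials n" if xP: "x \<in> P" for x
  proof -
    obtain s B where x: "x = (s, B)" "s \<in> gens J" "B \<subseteq> {1..<mmax s}" using xP unfolding P_def by auto
    have "s \<in> monomials n" using x(2) gens_subset monomial_ideal_subset[OF strongly_stable_monomial_ideal[OF J]] by blast
    moreover have "mmax s \<le> n" using mmax_props(3)[OF calculation] pos x(2) by simp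
    ultimately show ?thesis using x(3) unfolding x(1) sym_def by (intro monomialsI) (auto simp: monomials_def indicator_def split: if_splits)
  qed
  have support: "{a \<in> monomials n. fibre a \<noteq> 0} = sym ` P"
    unfolding fibre_def using finP sym_mon by auto
  have "{a \<in> monomials n. betti_mg K n J i a \<noteq> 0} = sym ` P"
    unfolding support[symmetric] using betti_mg by auto
  then have "betti K n J i = (\<Sum>a\<in>sym ` P. betti_mg K n J i a)" unfolding betti_def by simp
  also have "\<dots> = (\<Sum>a\<in>sym ` P. fibre a)" using betti_mg sym_mon by (intro sum.cong) auto
  also have "\<dots> = card P"
  proof -
    have "{x \<in> P. sym x \<in> sym ` P} = P" by blast
    then show ?thesis unfolding fibre_def using sum_card_fibres[of P "sym ` P" sym] finP by simp
  qed
  also have "\<dots> = (\<Sum>s\<in>gens J. (mmax s - 1) choose i)"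
    unfolding P_def using fin by (simp add: n_subsets)
  finally show ?thesis .
qed

section \<open>Truncations of a strongly stable ideal\<close>

definition deg_slice :: "nat \<Rightarrow> monomial set \<Rightarrow> nat \<Rightarrow> monomial set" where
  "deg_slice n I j = {w \<in> I. mdeg n w = j}"

lemma finite_mdeg_le: "finite {u \<in> monomials n. mdeg n u \<le> D}"
proof (rule finite_subset)
  show "{u \<in> monomials n. mdeg n u \<le> D} \<subseteq> {f. \<forall>x. (x \<in> {1..n} \<longrightarrow> f x \<in> {0..D}) \<and> (x \<notin> {1..n} \<longrightarrow> f x = 0)}"
  proof (intro subsetI CollectI allI conjI impI)
    fix f x assume f: "f \<in> {u \<in> monomials n. mdeg n u \<le> D}"
    show "f x \<in> {0..D}" if "x \<in> {1..n}"
      using f member_le_sum[of x "{1..n}" f] that unfolding mdeg_def by auto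
    show "f x = 0" if "x \<notin> {1..n}"
      using f that unfolding monomials_def by auto
  qed
  show "finite {f. \<forall>x. (x \<in> {1..n} \<longrightarrow> f x \<in> {0..D}) \<and> (x \<notin> {1..n} \<longrightarrow> f x = (0::nat))}"
    by (rule finite_set_of_finite_funs) auto
qed

lemma finite_deg_slice: "I \<subseteq> monomials n \<Longrightarrow> finite (deg_slice n I j)"
  by (rule finite_subset[OF _ finite_mdeg_le[of n j]]) (auto simp: deg_slice_def)

lemma finite_gens_if_mdeg_bounded:
  assumes "monomial_ideal n I" "\<forall>u\<in>gens I. mdeg n u \<le> D"
  shows "finite (gens I)"
  using assms gens_subset monomial_ideal_subset
  by (intro finite_subset[OF _ finite_mdeg_le[of n D]]) blast

lemma strongly_stable_deg_part:
  assumes J: "strongly_stable n I"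
  shows "strongly_stable n (deg_part n I j)"
  unfolding strongly_stable_def
proof (intro conjI ballI allI impI)
  show "monomial_ideal n (deg_part n I j)"
    unfolding monomial_ideal_def deg_part_def using order_trans by blast
  fix v k i assume v: "v \<in> deg_part n I j" and vk: "0 < v k" and i: "1 \<le> i \<and> i < k"
  obtain u where u: "u \<in> I" "mdeg n u = j" "u \<le> v" and v_mon: "v \<in> monomials n"
    using v unfolding deg_part_def by blast
  have "k \<le> n" using vk monomials_zero[OF v_mon, of k] by (metis not_le neq0_conv)
  then have shift_mon: "shift v i k \<in> monomials n" using shift_monomials[OF v_mon] i by simp
  show "(v(k := v k - 1))(i := v i + 1) \<in> deg_part n I j"
    unfolding shift_def[symmetric]
  proof (cases "u k < v k")
    case True
    have "u \<le> shift v i k"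
    proof (rule le_funI)
      fix x show "u x \<le> shift v i k x" using le_funD[OF u(3), of x] True i by (auto simp: shift_apply)
    qed
    then show "shift v i k \<in> deg_part n I j" using u shift_mon unfolding deg_part_def by blast
  next
    case False
    then have uk: "u k = v k" using le_funD[OF u(3), of k] by simp
    have "shift u i k \<in> I" using strongly_stable_shift[OF J u(1)] uk vk i by simp
    moreover have "mdeg n (shift u i k) = j" using mdeg_shift[of i k n u] i \<open>k \<le> n\<close> uk vk u(2) by simp
    moreover have "shift u i k \<le> shift v i k"
    proof (rule le_funI)
      fix x show "shift u i k x \<le> shift v i k x" using le_funD[OF u(3), of x] uk i by (auto simp: shift_apply)
    qed
    ultimately show "shift v i k \<in> deg_part n I j" using shift_mon unfolding deg_part_def by blast
  qed
qed

lemma gens_deg_part: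
  assumes I: "monomial_ideal n I"
  shows "gens (deg_part n I j) = deg_slice n I j"
proof
  show "gens (deg_part n I j) \<subseteq> deg_slice n I j"
  proof
    fix w assume w: "w \<in> gens (deg_part n I j)"
    then obtain u where u: "u \<in> I" "mdeg n u = j" "u \<le> w"
      using gens_subset unfolding deg_part_def by blast
    have "u \<in> deg_part n I j" using u monomial_ideal_subset[OF I] unfolding deg_part_def by blast
    then have "u = w" using gens_minimal[OF w] u(3) by blast
    then show "w \<in> deg_slice n I j" using u unfolding deg_slice_def by simp
  qed
  show "deg_slice n I j \<subseteq> gens (deg_part n I j)"
  proof
    fix w assume "w \<in> deg_slice n I j"
    then have w: "w \<in> I" "mdeg n w = j" "w \<in> monomials n"
      using monomial_ideal_subset[OF I] unfolding deg_slice_def by auto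
    have "v = w" if v: "v \<in> deg_part n I j" "v \<le> w" for v
    proof -
      obtain u where "u \<in> I" "mdeg n u = j" "u \<le> v" "v \<in> monomials n"
        using v(1) unfolding deg_part_def by blast
      then show "v = w" using monomial_eq_if_le_mdeg[OF _ w(3) v(2)] mdeg_mono w(2) by metis
    qed
    moreover have "w \<in> deg_part n I j" using w unfolding deg_part_def by blast
    ultimately show "w \<in> gens (deg_part n I j)" unfolding gens_def by blast
  qed
qed

lemma deg_slice_eq_gens:
  assumes I: "monomial_ideal n I" and d: "\<forall>u\<in>gens I. d \<le> mdeg n u" and j: "j \<le> d"
  shows "deg_slice n I j = {u \<in> gens I. mdeg n u = j}"
proof -
  have deg_ge: "d \<le> mdeg n w" if "w \<in> I" for w
    using gens_below[OF I that] d mdeg_mono order_trans by metis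
  have "w \<in> gens I" if w: "w \<in> I" "mdeg n w = j" for w
  proof -
    have "v = w" if "v \<in> I" "v \<le> w" for v
      using monomial_eq_if_le_mdeg[of v n w] that w deg_ge[of v] j monomial_ideal_subset[OF I] by auto
    then show ?thesis unfolding gens_def using w(1) by blast
  qed
  then show ?thesis using gens_subset unfolding deg_slice_def by blast
qed

text \<open>Divide by a variable in which \<open>v\<close> exceeds a smaller element of \<open>I\<close>, then use strong
  stability to move that variable to the last one.\<close>

lemma strongly_stable_divide_mmax:
  assumes J: "strongly_stable n I" and v: "v \<in> I" "v \<notin> gens I" "0 < mdeg n v"
  shows "v(mmax v := v (mmax v) - 1) \<in> I"
proof -
  have I: "monomial_ideal n I" using strongly_stable_monomial_ideal[OF J] .
  have v_mon: "v \<in> monomials n" using v(1) monomial_ideal_subset[OF I] by blast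
  define m where "m = mmax v"
  have m: "1 \<le> m" "m \<le> n" "0 < v m" "\<And>k. m < k \<Longrightarrow> v k = 0"
    using mmax_props[OF v_mon v(3)] unfolding m_def by auto
  obtain v' where v': "v' \<in> I" "v' \<le> v" "v' \<noteq> v" using v(1,2) unfolding gens_def by blast
  then obtain p where p: "v' p < v p" by (meson antisym le_funI not_le)
  have "p \<le> m" using p m(4)[of p] by (cases "m < p") auto
  have "1 \<le> p" using p monomials_zero[OF v_mon, of p] by (metis le0 leD less_one not_le)
  define y where "y = v(p := v p - 1)"
  have "v' \<le> y" unfolding y_def using le_funD[OF v'(2)] p by (auto simp: le_fun_def)
  moreover have "y \<in> monomials n" unfolding y_def using v_mon unfolding monomials_def by auto
  ultimately have y: "y \<in> I" using monomial_idealD[OF I v'(1)] by blast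
  show ?thesis
  proof (cases "p = m")
    case True
    then show ?thesis using y unfolding y_def m_def by simp
  next
    case False
    then have "p < m" "0 < y m" using \<open>p \<le> m\<close> m(3) unfolding y_def by auto
    then have "shift y p m \<in> I" using strongly_stable_shift[OF J y _ \<open>1 \<le> p\<close>] by blast
    moreover have "shift y p m = v(m := v m - 1)"
      unfolding shift_def y_def using False p by (auto simp: fun_eq_iff)
    ultimately show ?thesis unfolding m_def by simp
  qed
qed

lemma raise_deg_slice:
  assumes I: "monomial_ideal n I" and w: "w \<in> deg_slice n I j" and j: "0 < j" and l: "mmax w \<le> l" "l \<le> n"
  shows "w + indicator {l} \<in> deg_slice n I (Suc j)" "w + indicator {l} \<notin> gens I"
    and "mmax (w + indicator {l}) = l"
proof -
  have w_I: "w \<in> I" "mdeg n w = j" and w_mon: "w \<in> monomials n"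
    using w monomial_ideal_subset[OF I] unfolding deg_slice_def by auto
  have "1 \<le> l" using mmax_props(2)[OF w_mon] w_I(2) j l(1) by simp
  then have l_range: "{l} \<subseteq> {1..n}" using l(2) by simp
  have "w + indicator {l} \<in> monomials n"
    using w_mon l_range by (intro monomialsI) (auto simp: monomials_def indicator_def split: if_splits)
  moreover have "w \<le> w + indicator {l}" by (simp add: le_fun_def)
  ultimately have "w + indicator {l} \<in> I" using monomial_idealD[OF I w_I(1)] by blast
  then show "w + indicator {l} \<in> deg_slice n I (Suc j)"
    unfolding deg_slice_def using mdeg_add mdeg_indicator[OF l_range] w_I(2) by simp
  have "w \<noteq> w + indicator {l}" by (auto simp: fun_eq_iff intro!: exI[of _ l])
  then show "w + indicator {l} \<notin> gens I" using gens_minimal[OF _ w_I(1)] \<open>w \<le> w + indicator {l}\<close> by metis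
  show "mmax (w + indicator {l}) = l" using mmax_add_indicator[OF w_mon _ l(1)] w_I(2) j by simp
qed

text \<open>Every monomial of degree \<open>j + 1\<close> of \<open>I\<close> that is not a minimal generator arises uniquely
  as \<open>w x\<^sub>l\<close> with \<open>w \<in> deg_slice n I j\<close> and \<open>mmax w \<le> l\<close>, namely with \<open>l = mmax (w x\<^sub>l)\<close>.\<close>

lemma deg_slice_Suc:
  assumes J: "strongly_stable n I" and j: "0 < j"
  shows "deg_slice n I (Suc j) = {u \<in> gens I. mdeg n u = Suc j}
      \<union> (\<lambda>(w, l). w + indicator {l}) ` (SIGMA w:deg_slice n I j. {mmax w..n})"
    (is "_ = ?G \<union> ?raise ` ?Q")
proof (intro equalityI subsetI)
  have I: "monomial_ideal n I" using strongly_stable_monomial_ideal[OF J] .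
  fix v assume v: "v \<in> deg_slice n I (Suc j)"
  then have v_I: "v \<in> I" "mdeg n v = Suc j" and v_mon: "v \<in> monomials n"
    using monomial_ideal_subset[OF I] unfolding deg_slice_def by auto
  show "v \<in> ?G \<union> ?raise ` ?Q"
  proof (cases "v \<in> gens I")
    case False
    define m where "m = mmax v"
    have m: "1 \<le> m" "m \<le> n" "0 < v m" "\<And>k. m < k \<Longrightarrow> v k = 0"
      using mmax_props[OF v_mon] v_I(2) unfolding m_def by auto
    define w where "w = v(m := v m - 1)"
    have w: "w \<in> I" unfolding w_def m_def using strongly_stable_divide_mmax[OF J v_I(1) False] v_I(2) by simp
    have "mdeg n w + 1 = mdeg n v"
      unfolding mdeg_def w_def using sum_fun_upd_nat[of "{1..n}" m v "v m - 1"] m by simp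
    then have w_slice: "w \<in> deg_slice n I j" using w v_I(2) unfolding deg_slice_def by simp
    have "mmax w \<le> m"
      using mmax_le_if_le[of w n v m] w_slice j monomial_ideal_subset[OF I] m(4)
      unfolding deg_slice_def w_def by (auto simp: le_fun_def)
    then have "(w, m) \<in> ?Q" using w_slice m(2) by simp
    moreover have "v = ?raise (w, m)" unfolding w_def using m(3) by (auto simp: fun_eq_iff indicator_def)
    ultimately show ?thesis by blast
  qed (use v_I in blast)
next
  fix v assume "v \<in> ?G \<union> ?raise ` ?Q"
  then show "v \<in> deg_slice n I (Suc j)"
    using raise_deg_slice(1)[OF strongly_stable_monomial_ideal[OF J] _ j] gens_subset
    unfolding deg_slice_def by auto
qed

lemma sum_binomial_deg_slice_Suc:
  assumes J: "strongly_stable n I" and j: "0 < j"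
  shows "(\<Sum>v\<in>deg_slice n I (Suc j). (mmax v - 1) choose i)
     = (\<Sum>u\<in>{u \<in> gens I. mdeg n u = Suc j}. (mmax u - 1) choose i)
       + (\<Sum>w\<in>deg_slice n I j. (mmax w - 1) choose i)
       + (\<Sum>w\<in>deg_slice n I j. \<Sum>l\<in>{mmax w<..n}. (l - 1) choose i)"
proof -
  have I: "monomial_ideal n I" using strongly_stable_monomial_ideal[OF J] .
  define Q where "Q = (SIGMA w:deg_slice n I j. {mmax w..n})"
  define raise where "raise = (\<lambda>(w, l). w + indicator {l} :: monomial)"
  have raise: "raise x \<notin> gens I" "mmax (raise x) = snd x" if "x \<in> Q" for x
    using raise_deg_slice(2,3)[OF I _ j] that unfolding Q_def raise_def by auto
  have fin_slice: "finite (deg_slice n I k)" for k using finite_deg_slice monomial_ideal_subset[OF I] by blast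
  then have finQ: "finite Q" unfolding Q_def by auto
  have "inj_on raise Q"
  proof (rule inj_onI)
    fix x y assume xy: "x \<in> Q" "y \<in> Q" "raise x = raise y"
    then have "snd x = snd y" using raise(2) by metis
    then show "x = y" using xy(3) unfolding raise_def by (auto simp: prod_eq_iff fun_eq_iff split: prod.splits)
  qed
  have "(\<Sum>v\<in>deg_slice n I (Suc j). (mmax v - 1) choose i)
      = (\<Sum>u\<in>{u \<in> gens I. mdeg n u = Suc j}. (mmax u - 1) choose i) + (\<Sum>v\<in>raise ` Q. (mmax v - 1) choose i)"
  proof -
    have "{u \<in> gens I. mdeg n u = Suc j} \<subseteq> deg_slice n I (Suc j)"
      using gens_subset unfolding deg_slice_def by blast
    then have "finite {u \<in> gens I. mdeg n u = Suc j}" using fin_slice finite_subset by blast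
    then show ?thesis unfolding deg_slice_Suc[OF J j, folded Q_def raise_def] using raise(1) finQ
      by (intro sum.union_disjoint) auto
  qed
  also have "(\<Sum>v\<in>raise ` Q. (mmax v - 1) choose i) = (\<Sum>x\<in>Q. (mmax (raise x) - 1) choose i)"
    using sum.reindex[OF \<open>inj_on raise Q\<close>] by simp
  also have "\<dots> = (\<Sum>(w, l)\<in>Q. (l - 1) choose i)"
    using raise(2) by (intro sum.cong) (auto simp: split_beta)
  also have "\<dots> = (\<Sum>w\<in>deg_slice n I j. ((mmax w - 1) choose i) + (\<Sum>l\<in>{mmax w<..n}. (l - 1) choose i))"
  proof -
    have "{mmax w..n} = insert (mmax w) {mmax w<..n}" if "w \<in> deg_slice n I j" for w
      using that mmax_props(3)[of w n] j monomial_ideal_subset[OF I] unfolding deg_slice_def by auto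
    then have "(\<Sum>w\<in>deg_slice n I j. \<Sum>l\<in>{mmax w..n}. (l - 1) choose i)
        = (\<Sum>w\<in>deg_slice n I j. ((mmax w - 1) choose i) + (\<Sum>l\<in>{mmax w<..n}. (l - 1) choose i))"
      by (intro sum.cong) simp_all
    then show ?thesis unfolding Q_def using fin_slice by (subst sum.Sigma[symmetric]) auto
  qed
  finally show ?thesis by (simp add: sum.distrib)
qed

lemma sum_binomial_deg_slice:
  assumes J: "strongly_stable n I" and d: "\<forall>u\<in>gens I. d \<le> mdeg n u" "1 \<le> d" and t: "d \<le> t"
  shows "(\<Sum>v\<in>deg_slice n I t. (mmax v - 1) choose i)
     = (\<Sum>u\<in>{u \<in> gens I. mdeg n u \<le> t}. (mmax u - 1) choose i)
       + (\<Sum>j\<in>{d..<t}. \<Sum>w\<in>deg_slice n I j. \<Sum>l\<in>{mmax w<..n}. (l - 1) choose i)"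
  using t
proof (induction t rule: dec_induct)
  case base
  have "deg_slice n I d = {u \<in> gens I. mdeg n u \<le> d}"
    using deg_slice_eq_gens[OF strongly_stable_monomial_ideal[OF J] d(1) order_refl] d(1) by force
  then show ?case by simp
next
  case (step t)
  have "{u \<in> gens I. mdeg n u \<le> Suc t} \<subseteq> {u \<in> monomials n. mdeg n u \<le> Suc t}"
    using gens_subset monomial_ideal_subset[OF strongly_stable_monomial_ideal[OF J]] by blast
  then have fin: "finite {u \<in> gens I. mdeg n u \<le> Suc t}" using finite_mdeg_le finite_subset by blast
  have split: "{u \<in> gens I. mdeg n u \<le> Suc t} = {u \<in> gens I. mdeg n u \<le> t} \<union> {u \<in> gens I. mdeg n u = Suc t}"
    by auto
  have "(\<Sum>u\<in>{u \<in> gens I. mdeg n u \<le> Suc t}. (mmax u - 1) choose i)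
      = (\<Sum>u\<in>{u \<in> gens I. mdeg n u \<le> t}. (mmax u - 1) choose i)
        + (\<Sum>u\<in>{u \<in> gens I. mdeg n u = Suc t}. (mmax u - 1) choose i)"
    unfolding split using fin split by (intro sum.union_disjoint) auto
  then show ?case
    using sum_binomial_deg_slice_Suc[OF J, of t i] step d(2) by simp
qed

lemma m_le_deg_part:
  assumes I: "monomial_ideal n I" and j: "0 < j" and k: "1 \<le> k"
  shows "m_le (deg_part n I j) (k - 1) = card {w \<in> deg_slice n I j. mmax w < k}"
proof -
  let ?L = "deg_slice n I j"
  have "1 \<le> mmax w" if "w \<in> ?L" for w
    using that mmax_props(2) j monomial_ideal_subset[OF I] unfolding deg_slice_def by auto
  then have "{w \<in> ?L. mmax w \<in> {1..k - 1}} = {w \<in> ?L. mmax w < k}" using k by force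
  moreover have "m_le (deg_part n I j) (k - 1) = (\<Sum>s\<in>{1..k - 1}. card {w \<in> ?L. mmax w = s})"
    unfolding m_le_def m_count_def gens_deg_part[OF I] ..
  ultimately show ?thesis
    using sum_card_fibres[of ?L "{1..k - 1}" mmax] finite_deg_slice monomial_ideal_subset[OF I] by simp
qed

lemma sum_m_le_deg_part:
  assumes I: "monomial_ideal n I" and j: "0 < j"
  shows "(\<Sum>k=i+1..n. m_le (deg_part n I j) (k - 1) * ((k - 1) choose i))
     = (\<Sum>w\<in>deg_slice n I j. \<Sum>l\<in>{mmax w<..n}. (l - 1) choose i)"
proof -
  let ?L = "deg_slice n I j"
  have finL: "finite ?L" using finite_deg_slice monomial_ideal_subset[OF I] by blast
  have "(\<Sum>k=i+1..n. m_le (deg_part n I j) (k - 1) * ((k - 1) choose i))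
      = (\<Sum>k=i+1..n. \<Sum>w\<in>?L. if mmax w < k then (k - 1) choose i else 0)"
    using m_le_deg_part[OF I j] finL by (intro sum.cong refl) (simp add: sum.inter_filter[symmetric])
  also have "\<dots> = (\<Sum>w\<in>?L. \<Sum>k=i+1..n. if mmax w < k then (k - 1) choose i else 0)"
    by (rule sum.swap)
  also have "\<dots> = (\<Sum>w\<in>?L. \<Sum>l\<in>{mmax w<..n}. (l - 1) choose i)"
  proof (rule sum.cong[OF refl])
    fix w
    have "(\<Sum>k=i+1..n. if mmax w < k then (k - 1) choose i else 0) = (\<Sum>k=1..n. if mmax w < k then (k - 1) choose i else 0)"
      by (rule sum.mono_neutral_left) (auto simp: binomial_eq_0)
    also have "\<dots> = (\<Sum>l\<in>{mmax w<..n}. (l - 1) choose i)"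
      by (simp add: sum.If_cases) (intro sum.cong, auto)
    finally show "(\<Sum>k=i+1..n. if mmax w < k then (k - 1) choose i else 0) = (\<Sum>l\<in>{mmax w<..n}. (l - 1) choose i)" .
  qed
  finally show ?thesis .
qed

lemma betti_deg_part:
  assumes J: "strongly_stable n I" and j: "0 < j"
  shows "betti K n (deg_part n I j) i = (\<Sum>v\<in>deg_slice n I j. (mmax v - 1) choose i)"
proof -
  have I: "monomial_ideal n I" using strongly_stable_monomial_ideal[OF J] .
  show ?thesis
    using betti_strongly_stable[OF strongly_stable_deg_part[OF J], of j K i] j
      finite_deg_slice[OF monomial_ideal_subset[OF I]]
    unfolding gens_deg_part[OF I] deg_slice_def by simp
qed

theorem lemma3p1:
  fixes K :: "'k::field itself" and n d N :: nat and I :: "monomial set"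
  assumes "strongly_stable n I"
    and "1 \<le> d" and "d \<le> N"
    and "\<forall>u\<in>gens I. d \<le> mdeg n u \<and> mdeg n u \<le> N"
  shows "int (betti K n (deg_part n I (N + 1)) i) - int (betti K n I i) =
    (\<Sum>j=d..N. \<Sum>k=i+1..n. int (m_le (deg_part n I j) (k - 1) * ((k - 1) choose i)))"
proof -
  note J = assms(1)
  have I: "monomial_ideal n I" using strongly_stable_monomial_ideal[OF J] .
  have low: "\<forall>u\<in>gens I. d \<le> mdeg n u" using assms(4) by blast
  have pos: "\<forall>u\<in>gens I. 0 < mdeg n u" using assms(2,4) by fastforce
  have fin: "finite (gens I)" using finite_gens_if_mdeg_bounded[OF I] assms(4) by blast
  define tail where "tail j = (\<Sum>w\<in>deg_slice n I j. \<Sum>l\<in>{mmax w<..n}. (l - 1) choose i)" for j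
  have "betti K n (deg_part n I (N + 1)) i = (\<Sum>v\<in>deg_slice n I (Suc N). (mmax v - 1) choose i)"
    using betti_deg_part[OF J, of "Suc N"] by simp
  also have "\<dots> = (\<Sum>u\<in>gens I. (mmax u - 1) choose i) + (\<Sum>j=d..N. tail j)"
  proof -
    have "{u \<in> gens I. mdeg n u \<le> Suc N} = gens I" "{d..<Suc N} = {d..N}" using assms(4) by auto
    then show ?thesis
      using sum_binomial_deg_slice[OF J low assms(2), of "Suc N" i] assms(3) unfolding tail_def by simp
  qed
  also have "(\<Sum>u\<in>gens I. (mmax u - 1) choose i) = betti K n I i"
    by (rule betti_strongly_stable[OF J pos fin, symmetric])
  finally have betti: "betti K n (deg_part n I (N + 1)) i = betti K n I i + (\<Sum>j=d..N. tail j)" .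
  have "(\<Sum>k=i+1..n. int (m_le (deg_part n I j) (k - 1) * ((k - 1) choose i))) = int (tail j)"
    if "j \<in> {d..N}" for j
  proof -
    have "0 < j" using that assms(2) by simp
    then show ?thesis unfolding tail_def sum_m_le_deg_part[OF I \<open>0 < j\<close>, symmetric] by (simp only: of_nat_sum)
  qed
  then show ?thesis unfolding betti by (simp add: of_nat_sum)
qed

end
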